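(* Let $\mathcal{X}$ be a projective, nonsingular, geometrically irreducible curve of genus $g$ over $\mathbb{F}_q$. Let $\mathcal{P}$ be a proper subset of $\mathcal{X}(\mathbb{F}_q)$ and $D=\sum_{P\in\mathcal{P}}P$. Let $G,H,J$ be divisors on $\mathcal{X}$ of degree at most $\deg(D)-1$ with $(\mathrm{supp}(G)\cup\mathrm{supp}(H)\cup\mathrm{supp}(J))\cap\mathrm{supp}(D)=\varnothing$. Let $f\in\mathscr{L}(J)$ be nonzero and suppose that (i) $\ell\big(\gcd(G,H-(f))\big)=0$, and (ii) $\ell\big(\mathrm{lcm}(G,H-(f))-D\big)=0$. Then $C(D,G)\cap\big(\mathrm{ev}_D(f)*C(D,H)\big)=\{0\}$.
   Context: $(f)$ is the principal divisor of $f$; $\gcd$ and $\mathrm{lcm}$ of divisors are coefficientwise min and max. $\mathscr{L}(E)=\{f\in\mathbb{F}_q(\mathcal{X})^*:(f)+E\ge0\}\cup\{0\}$, $\ell(E)=\dim\mathscr{L}(E)$. Writing $D=P_1+\dots+P_n$, $\mathrm{ev}_D(f)=(f(P_1),\dots,f(P_n))$ and, for $E$ with support disjoint from $\mathrm{supp}(D)$, $C(D,E)=\{\mathrm{ev}_D(h):h\in\mathscr{L}(E)\}$. $*$ is the componentwise product and $v*C'=\{v*c:c\in C'\}$. *)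

theory Defs
  imports "HOL-Computational_Algebra.Polynomial"
begin

text \<open>
  Model: the curve X over F_q is represented by its function field F = F_q(X),
  which is the whole type 'f (a field), with constant field K = F_q (a finite
  subfield of 'f).  Points of X correspond to places of F/K; a place is
  represented by its valuation ring R.  Rational points X(F_q) are the places
  of degree one.
\<close>

definition subfield :: "'f::field set \<Rightarrow> bool" where
  "subfield K \<longleftrightarrow> 0 \<in> K \<and> 1 \<in> K \<and>
     (\<forall>a\<in>K. \<forall>b\<in>K. a + b \<in> K \<and> a * b \<in> K) \<and>
     (\<forall>a\<in>K. - a \<in> K) \<and> (\<forall>a\<in>K. a \<noteq> 0 \<longrightarrow> inverse a \<in> K)"

definition algebraic_over :: "'f::field set \<Rightarrow> 'f \<Rightarrow> bool" where
  "algebraic_over S y \<longleftrightarrow> (\<exists>p::'f poly. p \<noteq> 0 \<and> (\<forall>i. coeff p i \<in> S) \<and> poly p y = 0)"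

definition field_adj :: "'f::field set \<Rightarrow> 'f \<Rightarrow> 'f set" where
  "field_adj S x = \<Inter>{L. subfield L \<and> S \<subseteq> L \<and> x \<in> L}"

definition finite_dim_over :: "'f::field set \<Rightarrow> bool" where
  "finite_dim_over S \<longleftrightarrow> (\<exists>B. finite B \<and>
     (\<forall>y. \<exists>c. (\<forall>b\<in>B. c b \<in> S) \<and> y = (\<Sum>b\<in>B. c b * b)))"

text \<open>'f is an algebraic function field of one variable over the finite field K
  with full constant field K (i.e. the function field of a projective, nonsingular,
  geometrically irreducible curve over K).\<close>
definition function_field :: "'f::field set \<Rightarrow> bool" where
  "function_field K \<longleftrightarrow> subfield K \<and> finite K \<and>
     (\<exists>x. \<not> algebraic_over K x \<and> finite_dim_over (field_adj K x)) \<and>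
     (\<forall>y. algebraic_over K y \<longrightarrow> y \<in> K)"

definition valuation_ring :: "'f::field set \<Rightarrow> 'f set \<Rightarrow> bool" where
  "valuation_ring K R \<longleftrightarrow> K \<subseteq> R \<and> R \<noteq> UNIV \<and>
     (\<forall>a\<in>R. \<forall>b\<in>R. a + b \<in> R \<and> a * b \<in> R \<and> - a \<in> R) \<and>
     (\<forall>z. z \<noteq> 0 \<longrightarrow> z \<in> R \<or> inverse z \<in> R)"

definition place_ideal :: "'f::field set \<Rightarrow> 'f set" where
  "place_ideal R = {z \<in> R. z = 0 \<or> inverse z \<notin> R}"

definition places :: "'f::field set \<Rightarrow> 'f set set" where
  "places K = {R. valuation_ring K R}"

text \<open>Normalized discrete valuation v_P (the value at 0 is irrelevant, it is
  never used).\<close>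
definition val :: "'f::field set \<Rightarrow> 'f \<Rightarrow> int" where
  "val R z = (if z = 0 then 0 else
     (THE n::int. \<exists>t\<in>R. place_ideal R = {t * y | y. y \<in> R} \<and>
        z * t powi (- n) \<in> R \<and> inverse (z * t powi (- n)) \<in> R))"

definition residue_field :: "'f::field set \<Rightarrow> 'f set set" where
  "residue_field R = (\<lambda>z. {z + p | p. p \<in> place_ideal R}) ` R"

text \<open>Degree of a place: [R/P : K], expressed via |R/P| = |K|^deg.\<close>
definition deg_place :: "'f::field set \<Rightarrow> 'f set \<Rightarrow> nat" where
  "deg_place K R = (THE n. card (residue_field R) = card K ^ n)"

definition rational_places :: "'f::field set \<Rightarrow> 'f set set" where
  "rational_places K = {R \<in> places K. deg_place K R = 1}"

type_synonym 'f divisor = "'f set \<Rightarrow> int"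

definition is_divisor :: "'f::field set \<Rightarrow> 'f divisor \<Rightarrow> bool" where
  "is_divisor K E \<longleftrightarrow> finite {R. E R \<noteq> 0} \<and> (\<forall>R. E R \<noteq> 0 \<longrightarrow> R \<in> places K)"

definition supp :: "'f divisor \<Rightarrow> 'f set set" where
  "supp E = {R. E R \<noteq> 0}"

definition deg_div :: "'f::field set \<Rightarrow> 'f divisor \<Rightarrow> int" where
  "deg_div K E = (\<Sum>R\<in>supp E. E R * int (deg_place K R))"

definition sum_places :: "'f set set \<Rightarrow> 'f divisor" where
  "sum_places Ps = (\<lambda>R. if R \<in> Ps then 1 else 0)"

definition principal_div :: "'f::field set \<Rightarrow> 'f \<Rightarrow> 'f divisor" where
  "principal_div K f = (\<lambda>R. if R \<in> places K then val R f else 0)"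

definition gcd_div :: "'f divisor \<Rightarrow> 'f divisor \<Rightarrow> 'f divisor" where
  "gcd_div E1 E2 = (\<lambda>R. min (E1 R) (E2 R))"

definition lcm_div :: "'f divisor \<Rightarrow> 'f divisor \<Rightarrow> 'f divisor" where
  "lcm_div E1 E2 = (\<lambda>R. max (E1 R) (E2 R))"

definition Lspace :: "'f::field set \<Rightarrow> 'f divisor \<Rightarrow> 'f set" where
  "Lspace K E = {f. f \<noteq> 0 \<and> (\<forall>R\<in>places K. principal_div K f R + E R \<ge> 0)} \<union> {0}"

text \<open>l(E) = dim_K L(E), expressed via |L(E)| = |K|^l(E).\<close>
definition ell :: "'f::field set \<Rightarrow> 'f divisor \<Rightarrow> nat" where
  "ell K E = (THE n. card (Lspace K E) = card K ^ n)"

definition eval_at :: "'f::field set \<Rightarrow> 'f set \<Rightarrow> 'f \<Rightarrow> 'f" where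
  "eval_at K R f = (THE c. c \<in> K \<and> f - c \<in> place_ideal R)"

text \<open>ev_D, with vectors indexed by the places in Ps (extended by 0 outside).\<close>
definition ev_D :: "'f::field set \<Rightarrow> 'f set set \<Rightarrow> 'f \<Rightarrow> ('f set \<Rightarrow> 'f)" where
  "ev_D K Ps f = (\<lambda>R. if R \<in> Ps then eval_at K R f else 0)"

definition AG_code :: "'f::field set \<Rightarrow> 'f set set \<Rightarrow> 'f divisor \<Rightarrow> ('f set \<Rightarrow> 'f) set" where
  "AG_code K Ps E = ev_D K Ps ` Lspace K E"

definition cw_mult_code :: "('a \<Rightarrow> 'f::field) \<Rightarrow> ('a \<Rightarrow> 'f) set \<Rightarrow> ('a \<Rightarrow> 'f) set" where
  "cw_mult_code v C = (\<lambda>c. (\<lambda>i. v i * c i)) ` C"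

end

theory Submission
  imports Defs "HOL-Library.FuncSet"
begin

text \<open>If \<open>ev(g) = ev(f) * ev(h)\<close> with \<open>g \<in> L(G)\<close> and \<open>h \<in> L(H)\<close>, then \<open>g - f h\<close> lies in
  \<open>L(lcm(G, H - (f)))\<close> and vanishes at the points of \<open>D\<close>, so it lies in \<open>L(lcm(G, H - (f)) - D) = 0\<close>;
  hence \<open>g = f h \<in> L(G) \<inter> L(H - (f)) = L(gcd(G, H - (f))) = 0\<close>.

  Most of the work goes into the model of the curve: \<open>ell K E = 0\<close> forces \<open>L(E) = 0\<close> only once
  \<open>L(E)\<close> is known to be a finite \<open>K\<close>-space. This needs that every valuation ring of the function
  field is discrete with finite residue field, which follows by counting dimensions over \<open>K(y)\<close>
  for a nonzero \<open>y\<close> in the maximal ideal, and that every non-constant function has a pole,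
  which is Chevalley's extension theorem.\<close>

section \<open>Subfields, polynomials over a subset, and spans\<close>

lemma sum_closed:
  assumes "0 \<in> A" "\<And>a b. a \<in> A \<Longrightarrow> b \<in> A \<Longrightarrow> a + b \<in> A" "\<And>i. i \<in> I \<Longrightarrow> f i \<in> A"
  shows "sum f I \<in> A"
proof (cases "finite I")
  case True
  then show ?thesis using assms(3)
    by (induction I rule: finite_induct) (auto intro: assms(1,2))
qed (simp add: assms)

context
  fixes K :: "'f::field set"
  assumes K: "subfield K"
begin

lemma subfield_0: "0 \<in> K" using K by (simp add: subfield_def)
lemma subfield_1: "1 \<in> K" using K by (simp add: subfield_def)
lemma subfield_add: "a \<in> K \<Longrightarrow> b \<in> K \<Longrightarrow> a + b \<in> K" using K by (simp add: subfield_def)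
lemma subfield_mult: "a \<in> K \<Longrightarrow> b \<in> K \<Longrightarrow> a * b \<in> K" using K by (simp add: subfield_def)
lemma subfield_uminus: "a \<in> K \<Longrightarrow> - a \<in> K" using K by (simp add: subfield_def)
lemma subfield_inverse: "a \<in> K \<Longrightarrow> inverse a \<in> K"
  using K by (cases "a = 0") (auto simp: subfield_def)
lemma subfield_diff: "a \<in> K \<Longrightarrow> b \<in> K \<Longrightarrow> a - b \<in> K"
  using subfield_add[of a "- b"] subfield_uminus[of b] by simp
lemma subfield_divide: "a \<in> K \<Longrightarrow> b \<in> K \<Longrightarrow> a / b \<in> K"
  using subfield_mult[of a "inverse b"] subfield_inverse[of b] by (simp add: divide_inverse)
lemma subfield_sum: "(\<And>i. i \<in> I \<Longrightarrow> f i \<in> K) \<Longrightarrow> sum f I \<in> K"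
  by (rule sum_closed) (auto intro: subfield_0 subfield_add)

end

lemma subfield_Inter: "(\<And>L. L \<in> \<LL> \<Longrightarrow> subfield L) \<Longrightarrow> subfield (\<Inter>\<LL>)"
  by (simp add: subfield_def)

lemma subfield_field_adj: "subfield (field_adj K x)"
  unfolding field_adj_def by (rule subfield_Inter) auto

lemma subset_field_adj: "K \<subseteq> field_adj K x"
  unfolding field_adj_def by auto

lemma mem_field_adj: "x \<in> field_adj K x"
  unfolding field_adj_def by auto

lemma field_adj_least: "subfield L \<Longrightarrow> K \<subseteq> L \<Longrightarrow> x \<in> L \<Longrightarrow> field_adj K x \<subseteq> L"
  unfolding field_adj_def by auto

definition poly_over :: "'f::field set \<Rightarrow> 'f poly \<Rightarrow> bool" where
  "poly_over A p \<longleftrightarrow> (\<forall>i. coeff p i \<in> A)"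

lemma poly_over_coeff: "poly_over A p \<Longrightarrow> coeff p i \<in> A" by (simp add: poly_over_def)

lemma poly_over_0: "0 \<in> A \<Longrightarrow> poly_over A 0" by (simp add: poly_over_def)

lemma poly_over_pCons: "poly_over A (pCons a p) \<longleftrightarrow> a \<in> A \<and> poly_over A p"
  unfolding poly_over_def by (auto simp: coeff_pCons split: nat.splits)

lemma poly_over_const: "0 \<in> A \<Longrightarrow> a \<in> A \<Longrightarrow> poly_over A [:a:]"
  by (simp add: poly_over_pCons poly_over_0)

lemma poly_over_X: "0 \<in> A \<Longrightarrow> 1 \<in> A \<Longrightarrow> poly_over A [:0, 1:]"
  by (simp add: poly_over_pCons poly_over_0)

lemma poly_over_add:
  "(\<And>a b. a \<in> A \<Longrightarrow> b \<in> A \<Longrightarrow> a + b \<in> A) \<Longrightarrow> poly_over A p \<Longrightarrow> poly_over A q \<Longrightarrow> poly_over A (p + q)"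
  by (simp add: poly_over_def)

lemma poly_over_uminus: "(\<And>a. a \<in> A \<Longrightarrow> - a \<in> A) \<Longrightarrow> poly_over A p \<Longrightarrow> poly_over A (- p)"
  by (simp add: poly_over_def)

lemma poly_over_diff:
  "(\<And>a b. a \<in> A \<Longrightarrow> b \<in> A \<Longrightarrow> a - b \<in> A) \<Longrightarrow> poly_over A p \<Longrightarrow> poly_over A q \<Longrightarrow> poly_over A (p - q)"
  by (simp add: poly_over_def)

lemma poly_over_mult:
  assumes "0 \<in> C" "\<And>a b. a \<in> C \<Longrightarrow> b \<in> C \<Longrightarrow> a + b \<in> C" "\<And>a b. a \<in> A \<Longrightarrow> b \<in> B \<Longrightarrow> a * b \<in> C"
    and "poly_over A p" "poly_over B q"
  shows "poly_over C (p * q)"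
  unfolding poly_over_def coeff_mult
  by (intro allI sum_closed assms(1,2))
     (auto intro: assms(3) poly_over_coeff[OF assms(4)] poly_over_coeff[OF assms(5)])

lemma poly_over_smult: "(\<And>b. b \<in> B \<Longrightarrow> a * b \<in> C) \<Longrightarrow> poly_over B p \<Longrightarrow> poly_over C (smult a p)"
  by (simp add: poly_over_def)

lemma poly_over_monom: "0 \<in> A \<Longrightarrow> a \<in> A \<Longrightarrow> poly_over A (monom a n)"
  by (simp add: poly_over_def coeff_monom)

lemma poly_over_mono: "A \<subseteq> B \<Longrightarrow> poly_over A p \<Longrightarrow> poly_over B p"
  by (auto simp: poly_over_def)

lemma poly_over_reflect: "0 \<in> A \<Longrightarrow> poly_over A p \<Longrightarrow> poly_over A (reflect_poly p)"
  by (simp add: poly_over_def coeff_reflect_poly)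

lemma poly_closed:
  assumes "0 \<in> A" "\<And>a b. a \<in> A \<Longrightarrow> b \<in> A \<Longrightarrow> a + b \<in> A" "\<And>a. a \<in> A \<Longrightarrow> x * a \<in> A"
    and "poly_over A p"
  shows "poly p x \<in> A"
  using assms(4) by (induction p) (use assms in \<open>auto simp: poly_over_pCons\<close>)

context
  fixes K :: "'f::field set"
  assumes K: "subfield K"
begin

lemma poly_over_subfield_add: "poly_over K p \<Longrightarrow> poly_over K q \<Longrightarrow> poly_over K (p + q)"
  by (rule poly_over_add) (auto intro: subfield_add[OF K])

lemma poly_over_subfield_mult: "poly_over K p \<Longrightarrow> poly_over K q \<Longrightarrow> poly_over K (p * q)"
  by (rule poly_over_mult) (auto intro: subfield_0[OF K] subfield_add[OF K] subfield_mult[OF K])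

lemma poly_over_subfield_const: "a \<in> K \<Longrightarrow> poly_over K [:a:]"
  by (rule poly_over_const) (auto intro: subfield_0[OF K])

lemma poly_over_subfield_prod: "(\<And>i. i \<in> I \<Longrightarrow> poly_over K (f i)) \<Longrightarrow> poly_over K (prod f I)"
proof (induction I rule: infinite_finite_induct)
  case (insert i I)
  then show ?case by (simp add: poly_over_subfield_mult)
qed (simp_all add: one_pCons poly_over_subfield_const subfield_1[OF K])

end

definition rat_exprs :: "'f::field set \<Rightarrow> 'f \<Rightarrow> 'f set" where
  "rat_exprs K x = {poly p x / poly q x | p q. poly_over K p \<and> poly_over K q \<and> poly q x \<noteq> 0}"

lemma rat_exprs_elem:
  "poly_over K p \<Longrightarrow> poly_over K q \<Longrightarrow> poly q x \<noteq> 0 \<Longrightarrow> poly p x / poly q x \<in> rat_exprs K x"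
  unfolding rat_exprs_def by blast

lemma subfield_rat_exprs:
  assumes K: "subfield K"
  shows "subfield (rat_exprs K x)"
proof -
  note closed = poly_over_subfield_add[OF K] poly_over_subfield_mult[OF K]
    poly_over_uminus[OF subfield_uminus[OF K]]
  have one: "poly_over K 1"
    using poly_over_subfield_const[OF K subfield_1[OF K]] by (simp add: one_pCons)
  have "0 \<in> rat_exprs K x"
    using rat_exprs_elem[OF poly_over_0[OF subfield_0[OF K]] one] by simp
  moreover have "1 \<in> rat_exprs K x"
    using rat_exprs_elem[OF one one] by simp
  moreover have "a + b \<in> rat_exprs K x \<and> a * b \<in> rat_exprs K x"
    if "a \<in> rat_exprs K x" "b \<in> rat_exprs K x" for a b
  proof -
    from that obtain p q p' q' where *: "a = poly p x / poly q x" "b = poly p' x / poly q' x"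
      "poly_over K p" "poly_over K q" "poly q x \<noteq> 0" "poly_over K p'" "poly_over K q'" "poly q' x \<noteq> 0"
      unfolding rat_exprs_def by blast
    have "a + b = poly (p * q' + p' * q) x / poly (q * q') x" "a * b = poly (p * p') x / poly (q * q') x"
      using * by (simp_all add: add_frac_eq algebra_simps)
    moreover have "poly (q * q') x \<noteq> 0" using * by simp
    ultimately show ?thesis using * by (metis rat_exprs_elem closed)
  qed
  moreover have "- a \<in> rat_exprs K x \<and> (a \<noteq> 0 \<longrightarrow> inverse a \<in> rat_exprs K x)"
    if "a \<in> rat_exprs K x" for a
  proof -
    from that obtain p q where *: "a = poly p x / poly q x" "poly_over K p" "poly_over K q" "poly q x \<noteq> 0"
      unfolding rat_exprs_def by blast
    have "- a = poly (- p) x / poly q x" "inverse a = poly q x / poly p x" using * by simp_all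
    then show ?thesis using * by (metis rat_exprs_elem closed(3) divide_eq_0_iff)
  qed
  ultimately show ?thesis unfolding subfield_def by blast
qed

lemma field_adj_subset_rat_exprs:
  assumes K: "subfield K"
  shows "field_adj K x \<subseteq> rat_exprs K x"
proof (rule field_adj_least[OF subfield_rat_exprs[OF K]])
  have one: "poly_over K 1"
    using poly_over_subfield_const[OF K subfield_1[OF K]] by (simp add: one_pCons)
  show "K \<subseteq> rat_exprs K x"
    using rat_exprs_elem[OF poly_over_subfield_const[OF K] one, of _ x] by auto
  show "x \<in> rat_exprs K x"
    using rat_exprs_elem[OF poly_over_X[OF subfield_0[OF K] subfield_1[OF K]] one, of x] by simp
qed

definition span_over :: "'f::field set \<Rightarrow> 'f set \<Rightarrow> 'f set" where
  "span_over L B = {\<Sum>b\<in>B. c b * b | c. \<forall>b\<in>B. c b \<in> L}"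

lemma finite_dim_over_iff: "finite_dim_over L \<longleftrightarrow> (\<exists>B. finite B \<and> (\<forall>z. z \<in> span_over L B))"
  unfolding finite_dim_over_def span_over_def by (simp add: conj_commute eq_commute)

lemma span_over_mono: "L \<subseteq> L' \<Longrightarrow> span_over L B \<subseteq> span_over L' B"
  unfolding span_over_def by blast

lemma span_over_insert:
  assumes "v \<in> span_over L (insert b B)" "b \<notin> B" "finite B"
  shows "\<exists>a\<in>L. \<exists>w\<in>span_over L B. v = a * b + w"
proof -
  obtain c where "v = (\<Sum>x\<in>insert b B. c x * x)" "\<forall>x\<in>insert b B. c x \<in> L"
    using assms(1) unfolding span_over_def by blast
  then have "v = c b * b + (\<Sum>x\<in>B. c x * x)" "c b \<in> L" "(\<Sum>x\<in>B. c x * x) \<in> span_over L B"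
    using assms(2,3) unfolding span_over_def by auto
  then show ?thesis by blast
qed

lemma poly_of_relation:
  assumes "0 \<in> A" "\<forall>k\<le>N. c k \<in> A" "\<exists>k\<le>N. c k \<noteq> 0" "(\<Sum>k\<le>N. c k * v ^ k) = 0"
  shows "\<exists>p. p \<noteq> 0 \<and> poly_over A p \<and> poly p v = 0"
proof -
  define p where "p = (\<Sum>k\<le>N. monom (c k) k)"
  have coeff_p: "coeff p i = (if i \<le> N then c i else 0)" for i
    by (simp add: p_def coeff_sum coeff_monom)
  have "p \<noteq> 0" using assms(3) coeff_p by (metis coeff_0)
  moreover have "poly_over A p" using assms(1,2) by (simp add: poly_over_def coeff_p)
  moreover have "poly p v = 0" using assms(4) by (simp add: p_def poly_sum poly_monom)
  ultimately show ?thesis by blast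
qed

context
  fixes L :: "'f::field set"
  assumes L: "subfield L"
begin

lemma span_over_0: "0 \<in> span_over L B"
  unfolding span_over_def by (rule CollectI, rule exI[of _ "\<lambda>_. 0"]) (simp add: subfield_0[OF L])

lemma span_over_add: "v \<in> span_over L B \<Longrightarrow> w \<in> span_over L B \<Longrightarrow> v + w \<in> span_over L B"
proof -
  assume "v \<in> span_over L B" "w \<in> span_over L B"
  then obtain c d where "v = (\<Sum>b\<in>B. c b * b)" "\<forall>b\<in>B. c b \<in> L" "w = (\<Sum>b\<in>B. d b * b)" "\<forall>b\<in>B. d b \<in> L"
    unfolding span_over_def by blast
  then have "v + w = (\<Sum>b\<in>B. (c b + d b) * b)" "\<forall>b\<in>B. c b + d b \<in> L"
    by (auto simp: sum.distrib distrib_right intro: subfield_add[OF L])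
  then show ?thesis unfolding span_over_def mem_Collect_eq by (intro exI[where x="\<lambda>b. c b + d b"]) simp
qed

lemma span_over_smult: "a \<in> L \<Longrightarrow> v \<in> span_over L B \<Longrightarrow> a * v \<in> span_over L B"
proof -
  assume "a \<in> L" "v \<in> span_over L B"
  then obtain c where "v = (\<Sum>b\<in>B. c b * b)" "\<forall>b\<in>B. c b \<in> L"
    unfolding span_over_def by blast
  then have "a * v = (\<Sum>b\<in>B. (a * c b) * b)" "\<forall>b\<in>B. a * c b \<in> L"
    using \<open>a \<in> L\<close> by (auto simp: sum_distrib_left mult.assoc intro: subfield_mult[OF L])
  then show ?thesis unfolding span_over_def mem_Collect_eq by (intro exI[where x="\<lambda>b. a * c b"]) simp
qed

lemma span_over_diff: "v \<in> span_over L B \<Longrightarrow> w \<in> span_over L B \<Longrightarrow> v - w \<in> span_over L B"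
  using span_over_add[of v B "- w"] span_over_smult[of "- 1" w B] subfield_uminus[OF L subfield_1[OF L]]
  by simp

lemma span_over_sum: "(\<And>i. i \<in> I \<Longrightarrow> f i \<in> span_over L B) \<Longrightarrow> sum f I \<in> span_over L B"
  by (rule sum_closed) (auto intro: span_over_0 span_over_add)

lemma span_over_base: "finite B \<Longrightarrow> b \<in> B \<Longrightarrow> b \<in> span_over L B"
proof -
  assume B: "finite B" "b \<in> B"
  have "(\<Sum>b'\<in>B. (if b' = b then 1 else 0) * b') = (\<Sum>b'\<in>B. if b' = b then b' else 0)"
    by (rule sum.cong) auto
  also have "\<dots> = b" using B by (simp add: sum.delta')
  finally have "(\<Sum>b'\<in>B. (if b' = b then 1 else 0) * b') = b" .
  moreover have "\<forall>b'\<in>B. (if b' = b then 1 else 0) \<in> L"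
    using subfield_0[OF L] subfield_1[OF L] by auto
  ultimately show ?thesis unfolding span_over_def mem_Collect_eq
    by (intro exI[where x="\<lambda>b'. if b' = b then 1 else 0"]) simp
qed

lemma span_over_times:
  assumes v: "v \<in> span_over L E" and Eb: "\<And>e. e \<in> E \<Longrightarrow> e * b \<in> span_over L C"
  shows "v * b \<in> span_over L C"
proof -
  obtain c where c: "v = (\<Sum>e\<in>E. c e * e)" "\<forall>e\<in>E. c e \<in> L" using v unfolding span_over_def by blast
  have "v * b = (\<Sum>e\<in>E. c e * (e * b))" using c by (simp add: sum_distrib_right mult.assoc)
  also have "\<dots> \<in> span_over L C"
  proof (rule span_over_sum)
    fix e assume "e \<in> E"
    then show "c e * (e * b) \<in> span_over L C" using span_over_smult Eb c(2) by blast
  qed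
  finally show ?thesis .
qed

lemma span_over_dependent:
  assumes "finite B"
  shows "finite I \<Longrightarrow> card B < card I \<Longrightarrow> (\<forall>i\<in>I. ws i \<in> span_over L B) \<Longrightarrow>
    \<exists>c. (\<forall>i\<in>I. c i \<in> L) \<and> (\<exists>i\<in>I. c i \<noteq> 0) \<and> (\<Sum>i\<in>I. c i * ws i) = 0"
  using assms
proof (induction B arbitrary: I ws rule: finite_induct)
  case empty
  then have "\<forall>i\<in>I. ws i = 0" by (auto simp: span_over_def)
  moreover obtain i where "i \<in> I" using empty by fastforce
  ultimately show ?case using subfield_1[OF L] by (intro exI[of _ "\<lambda>_. 1"]) auto
next
  case (insert b B)
  have "\<forall>i\<in>I. \<exists>a\<in>L. \<exists>w\<in>span_over L B. ws i = a * b + w"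
    using insert span_over_insert by metis
  then obtain a w where aw: "\<And>i. i \<in> I \<Longrightarrow> a i \<in> L \<and> w i \<in> span_over L B \<and> ws i = a i * b + w i"
    by metis
  show ?case
  proof (cases "\<forall>i\<in>I. a i = 0")
    case True
    then have "\<forall>i\<in>I. ws i \<in> span_over L B" using aw by auto
    moreover have "card B < card I" using insert by simp
    ultimately show ?thesis using insert.IH[of I ws] insert.prems by blast
  next
    case False
    then obtain k where k: "k \<in> I" "a k \<noteq> 0" by blast
    define I' where "I' = I - {k}"
    define ws' where "ws' i = w i - (a i / a k) * w k" for i
    have "\<forall>i\<in>I'. ws' i \<in> span_over L B"
    proof
      fix i assume i: "i \<in> I'"
      then have "a i / a k \<in> L" using aw k I'_def by (auto intro: subfield_divide[OF L])
      moreover have "w i \<in> span_over L B" "w k \<in> span_over L B" using aw k i I'_def by auto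
      ultimately show "ws' i \<in> span_over L B"
        unfolding ws'_def by (intro span_over_diff span_over_smult)
    qed
    moreover have "finite I'" "card B < card I'"
      using insert k unfolding I'_def by (simp_all add: card_Diff_singleton)
    ultimately obtain c' where c': "\<forall>i\<in>I'. c' i \<in> L" "\<exists>i\<in>I'. c' i \<noteq> 0" "(\<Sum>i\<in>I'. c' i * ws' i) = 0"
      using insert.IH by blast
    txt \<open>Eliminate \<open>b\<close> using the vector \<open>ws k\<close>, whose \<open>b\<close>-coordinate is nonzero.\<close>
    define s where "s = (\<Sum>i\<in>I'. c' i * a i)"
    define c where "c i = (if i = k then - s / a k else c' i)" for i
    have "s \<in> L" unfolding s_def using c' aw I'_def
      by (auto intro!: subfield_sum[OF L] subfield_mult[OF L])
    then have "\<forall>i\<in>I. c i \<in> L" unfolding c_def using c' aw k I'_def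
      by (auto intro!: subfield_divide[OF L] subfield_uminus[OF L])
    moreover have "\<exists>i\<in>I. c i \<noteq> 0" using c' unfolding c_def I'_def by auto
    moreover have "(\<Sum>i\<in>I. c i * ws i) = (\<Sum>i\<in>I'. c' i * ws' i)"
    proof -
      have "(\<Sum>i\<in>I. c i * ws i) = c k * ws k + (\<Sum>i\<in>I'. c i * ws i)"
        using k insert(4) I'_def by (simp add: sum.remove)
      also have "(\<Sum>i\<in>I'. c i * ws i) = (\<Sum>i\<in>I'. c' i * (a i * b + w i))"
        by (rule sum.cong) (auto simp: c_def I'_def aw)
      also have "\<dots> = s * b + (\<Sum>i\<in>I'. c' i * w i)"
        unfolding s_def by (simp add: algebra_simps sum.distrib sum_distrib_right sum_distrib_left)
      also have "c k * ws k = - s / a k * (a k * b + w k)" using aw k c_def by simp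
      finally have "(\<Sum>i\<in>I. c i * ws i) = (\<Sum>i\<in>I'. c' i * w i) - s / a k * w k"
        using k by (simp add: field_simps)
      moreover have "(\<Sum>i\<in>I'. c' i * ws' i) = (\<Sum>i\<in>I'. c' i * w i) - s / a k * w k"
        unfolding ws'_def s_def
        by (simp add: right_diff_distrib sum_subtractf sum_distrib_left sum_distrib_right
            sum_divide_distrib mult_ac)
      ultimately show ?thesis by simp
    qed
    ultimately show ?thesis using c' by auto
  qed
qed

lemma powers_algebraic:
  assumes B: "finite B" and pow: "\<And>k. v ^ k \<in> span_over L B"
  shows "\<exists>p. p \<noteq> 0 \<and> poly_over L p \<and> poly p v = 0"
proof -
  obtain c where "\<forall>k\<in>{..card B}. c k \<in> L" "\<exists>k\<in>{..card B}. c k \<noteq> 0" "(\<Sum>k\<le>card B. c k * v ^ k) = 0"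
    using span_over_dependent[OF B, of "{..card B}" "\<lambda>k. v ^ k"] pow by auto
  then show ?thesis by (intro poly_of_relation[OF subfield_0[OF L]]) auto
qed

end

text \<open>Dividing a relation \<open>p(v) = 0\<close> by the largest possible power of \<open>v\<close> leaves a nonzero constant term.\<close>

lemma root_relation_nonzero_const:
  assumes "poly_over A p" "p \<noteq> 0" "poly p v = 0" "v \<noteq> 0"
  shows "\<exists>a q. a \<in> A \<and> a \<noteq> 0 \<and> poly_over A q \<and> a = - (v * poly q v)"
  using assms
proof (induction p rule: pCons_induct)
  case (pCons a p)
  show ?case
  proof (cases "a = 0")
    case True
    then show ?thesis using pCons by (simp add: poly_over_pCons)
  next
    case False
    then show ?thesis using pCons by (auto simp: poly_over_pCons eq_neg_iff_add_eq_0)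
  qed
qed simp

text \<open>Linear independence over \<open>K\<close> modulo a subgroup \<open>N\<close> closed under scalars from \<open>K\<close>:
  with \<open>N = {0}\<close> this is ordinary independence, with \<open>N\<close> a place ideal it is independence
  in the residue field.\<close>

definition independent_mod :: "'f::field set \<Rightarrow> 'f set \<Rightarrow> 'f set \<Rightarrow> bool" where
  "independent_mod K N Z \<longleftrightarrow>
     (\<forall>a. (\<forall>b\<in>Z. a b \<in> K) \<longrightarrow> (\<Sum>b\<in>Z. a b * b) \<in> N \<longrightarrow> (\<forall>b\<in>Z. a b = 0))"

context
  fixes K N :: "'f::field set"
  assumes K: "subfield K" and N: "0 \<in> N" "\<And>c x. c \<in> K \<Longrightarrow> x \<in> N \<Longrightarrow> c * x \<in> N"
begin

lemma insert_dependent_spans: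
  assumes Z: "finite Z" "independent_mod K N Z" and z: "z \<notin> Z"
    and dep: "\<not> independent_mod K N (insert z Z)"
  shows "\<exists>a. (\<forall>b\<in>Z. a b \<in> K) \<and> z - (\<Sum>b\<in>Z. a b * b) \<in> N"
proof -
  obtain a where a: "\<forall>b\<in>insert z Z. a b \<in> K" "(\<Sum>b\<in>insert z Z. a b * b) \<in> N"
    "\<exists>b\<in>insert z Z. a b \<noteq> 0"
    using dep unfolding independent_mod_def by blast
  have sum: "(\<Sum>b\<in>insert z Z. a b * b) = a z * z + (\<Sum>b\<in>Z. a b * b)" using Z z by simp
  have az: "a z \<noteq> 0"
  proof
    assume "a z = 0"
    then have "\<forall>b\<in>Z. a b = 0" using Z a sum unfolding independent_mod_def by simp
    then show False using a(3) \<open>a z = 0\<close> by auto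
  qed
  define a' where "a' b = - a b / a z" for b
  have "(\<Sum>b\<in>Z. a' b * b) = - (inverse (a z) * (\<Sum>b\<in>Z. a b * b))"
    unfolding a'_def by (simp add: sum_distrib_left sum_negf divide_inverse mult_ac)
  then have "z - (\<Sum>b\<in>Z. a' b * b) = inverse (a z) * (\<Sum>b\<in>insert z Z. a b * b)"
    using az by (simp add: sum distrib_left)
  moreover have "inverse (a z) \<in> K" using a(1) subfield_inverse[OF K] by simp
  ultimately have "z - (\<Sum>b\<in>Z. a' b * b) \<in> N" using N(2) a(2) by simp
  moreover have "\<forall>b\<in>Z. a' b \<in> K"
    using a(1) unfolding a'_def by (auto intro: subfield_divide[OF K] subfield_uminus[OF K])
  ultimately show ?thesis by blast
qed

text \<open>An independent subset of \<open>V\<close> of maximal size spans \<open>V\<close> modulo \<open>N\<close>.\<close>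

lemma exists_independent_spanning:
  assumes bound: "\<And>Z. finite Z \<Longrightarrow> Z \<subseteq> V \<Longrightarrow> independent_mod K N Z \<Longrightarrow> card Z \<le> n"
  shows "\<exists>Z. finite Z \<and> Z \<subseteq> V \<and> independent_mod K N Z \<and>
    (\<forall>z\<in>V. \<exists>a. (\<forall>b\<in>Z. a b \<in> K) \<and> z - (\<Sum>b\<in>Z. a b * b) \<in> N)"
proof -
  define Q where "Q Z \<longleftrightarrow> finite Z \<and> Z \<subseteq> V \<and> independent_mod K N Z" for Z
  have "Q {}" by (simp add: Q_def independent_mod_def)
  moreover have "\<forall>Z. Q Z \<longrightarrow> card Z < Suc n" using bound by (simp add: Q_def less_Suc_eq_le)
  ultimately obtain Z where Z: "Q Z" and Zmax: "\<And>Z'. Q Z' \<Longrightarrow> card Z' \<le> card Z"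
    using ex_has_greatest_nat[of Q "{}" card "Suc n"] by blast
  have fin: "finite Z" and ind: "independent_mod K N Z" using Z by (simp_all add: Q_def)
  have "\<exists>a. (\<forall>b\<in>Z. a b \<in> K) \<and> z - (\<Sum>b\<in>Z. a b * b) \<in> N" if z: "z \<in> V" for z
  proof (cases "z \<in> Z")
    case True
    have "(\<Sum>b\<in>Z. (if b = z then 1 else 0) * b) = (\<Sum>b\<in>Z. if b = z then b else 0)"
      by (rule sum.cong) auto
    also have "\<dots> = z" using True fin by (simp add: sum.delta')
    finally have "z - (\<Sum>b\<in>Z. (if b = z then 1 else 0) * b) \<in> N" using N(1) by simp
    moreover have "\<forall>b\<in>Z. (if b = z then 1 else 0) \<in> K" using subfield_0[OF K] subfield_1[OF K] by simp
    ultimately show ?thesis by (intro exI[of _ "\<lambda>b. if b = z then 1 else 0"]) simp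
  next
    case False
    have "\<not> independent_mod K N (insert z Z)"
    proof
      assume "independent_mod K N (insert z Z)"
      then have "Q (insert z Z)" using Z z by (simp add: Q_def)
      then have "card (insert z Z) \<le> card Z" by (rule Zmax)
      then show False using fin False by simp
    qed
    then show ?thesis using insert_dependent_spans[OF fin ind False] by blast
  qed
  then show ?thesis using Z unfolding Q_def by blast
qed

end

section \<open>Valuation rings of a function field\<close>

definition ring_unit :: "'f::field set \<Rightarrow> 'f \<Rightarrow> bool" where
  "ring_unit R z \<longleftrightarrow> z \<in> R \<and> z \<noteq> 0 \<and> inverse z \<in> R"

locale fun_field =
  fixes K :: "'f::field set"
  assumes function_field: "function_field K"
begin

lemma subfield_K: "subfield K" using function_field by (simp add: function_field_def)
lemma finite_K: "finite K" using function_field by (simp add: function_field_def)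
lemma K_0: "0 \<in> K" by (rule subfield_0[OF subfield_K])
lemma K_1: "1 \<in> K" by (rule subfield_1[OF subfield_K])

lemma root_in_K: "poly_over K p \<Longrightarrow> p \<noteq> 0 \<Longrightarrow> poly p z = 0 \<Longrightarrow> z \<in> K"
  using function_field by (auto simp: function_field_def algebraic_over_def poly_over_def)

lemma card_K: "2 \<le> card K"
proof -
  have "card {0::'f, 1} \<le> card K" using K_0 K_1 finite_K by (intro card_mono) auto
  then show ?thesis by simp
qed

lemma exists_finite_span_over_field_adj:
  "\<exists>x B. finite B \<and> (\<forall>z. z \<in> span_over (field_adj K x) B)"
  using function_field by (auto simp: function_field_def finite_dim_over_iff)

end

locale valring = fun_field +
  fixes R :: "'f::field set"
  assumes valuation_ring: "valuation_ring K R"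
begin

abbreviation "P \<equiv> place_ideal R"

lemma K_subset_R: "K \<subseteq> R" using valuation_ring by (simp add: valuation_ring_def)
lemma R_neq_UNIV: "R \<noteq> UNIV" using valuation_ring by (simp add: valuation_ring_def)
lemma R_add: "a \<in> R \<Longrightarrow> b \<in> R \<Longrightarrow> a + b \<in> R" using valuation_ring by (simp add: valuation_ring_def)
lemma R_mult: "a \<in> R \<Longrightarrow> b \<in> R \<Longrightarrow> a * b \<in> R" using valuation_ring by (simp add: valuation_ring_def)
lemma R_uminus: "a \<in> R \<Longrightarrow> - a \<in> R" using valuation_ring by (simp add: valuation_ring_def)
lemma R_or_inverse_R: "z \<noteq> 0 \<Longrightarrow> z \<in> R \<or> inverse z \<in> R"
  using valuation_ring by (simp add: valuation_ring_def)
lemma R_0: "0 \<in> R" using K_subset_R K_0 by auto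
lemma R_1: "1 \<in> R" using K_subset_R K_1 by auto
lemma R_sum: "(\<And>i. i \<in> I \<Longrightarrow> f i \<in> R) \<Longrightarrow> sum f I \<in> R"
  by (rule sum_closed) (auto intro: R_0 R_add)
lemma R_power: "a \<in> R \<Longrightarrow> a ^ n \<in> R" by (induction n) (auto intro: R_1 R_mult)
lemma R_poly: "poly_over R p \<Longrightarrow> x \<in> R \<Longrightarrow> poly p x \<in> R"
  by (rule poly_closed[of R]) (auto intro: R_0 R_add R_mult)
lemma R_poly_K: "poly_over K p \<Longrightarrow> x \<in> R \<Longrightarrow> poly p x \<in> R"
  using R_poly poly_over_mono[OF K_subset_R] by blast

lemma mem_P: "z \<in> P \<longleftrightarrow> z \<in> R \<and> (z = 0 \<or> inverse z \<notin> R)"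
  by (simp add: place_ideal_def)

lemma P_subset_R: "z \<in> P \<Longrightarrow> z \<in> R" by (simp add: mem_P)
lemma P_0: "0 \<in> P" by (simp add: mem_P R_0)
lemma one_notin_P: "1 \<notin> P" by (simp add: mem_P R_1)

lemma unit_notin_P: "ring_unit R z \<Longrightarrow> z \<notin> P" by (simp add: ring_unit_def mem_P)
lemma unit_in_R: "ring_unit R z \<Longrightarrow> z \<in> R" by (simp add: ring_unit_def)
lemma unit_nonzero: "ring_unit R z \<Longrightarrow> z \<noteq> 0" by (simp add: ring_unit_def)
lemma unit_if_notin_P: "z \<in> R \<Longrightarrow> z \<notin> P \<Longrightarrow> ring_unit R z" by (auto simp: ring_unit_def mem_P)
lemma unit_mult: "ring_unit R a \<Longrightarrow> ring_unit R b \<Longrightarrow> ring_unit R (a * b)"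
  by (auto simp: ring_unit_def R_mult inverse_mult_distrib)
lemma unit_inverse: "ring_unit R a \<Longrightarrow> ring_unit R (inverse a)"
  by (auto simp: ring_unit_def)
lemma unit_1: "ring_unit R 1" by (simp add: ring_unit_def R_1)
lemma unit_power: "ring_unit R a \<Longrightarrow> ring_unit R (a ^ n)"
  by (induction n) (auto intro: unit_1 unit_mult)
lemma unit_powi: "ring_unit R a \<Longrightarrow> ring_unit R (a powi k)"
  by (auto simp: power_int_def intro: unit_power unit_inverse)
lemma unit_K: "a \<in> K \<Longrightarrow> a \<noteq> 0 \<Longrightarrow> ring_unit R a"
  using K_subset_R subfield_inverse[OF subfield_K] by (auto simp: ring_unit_def)

lemma P_mult_R: "p \<in> P \<Longrightarrow> r \<in> R \<Longrightarrow> p * r \<in> P"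
proof (rule ccontr)
  assume p: "p \<in> P" and r: "r \<in> R" and pr: "p * r \<notin> P"
  then have nz: "p \<noteq> 0" "r \<noteq> 0" using P_0 by auto
  have "p * r \<in> R" using p r P_subset_R R_mult by blast
  then have "inverse (p * r) \<in> R" using pr by (simp add: mem_P)
  then have "r * inverse (p * r) \<in> R" using r R_mult by blast
  moreover have "r * inverse (p * r) = inverse p" using nz by (simp add: field_simps)
  ultimately have "inverse p \<in> R" by (simp only:)
  then show False using p nz by (simp add: mem_P)
qed

lemma R_mult_P: "r \<in> R \<Longrightarrow> p \<in> P \<Longrightarrow> r * p \<in> P"
  using P_mult_R[of p r] by (simp add: mult.commute)

lemma P_uminus: "p \<in> P \<Longrightarrow> - p \<in> P"
  using P_mult_R[of p "- 1"] R_uminus[OF R_1] by simp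

lemma P_add: "a \<in> P \<Longrightarrow> b \<in> P \<Longrightarrow> a + b \<in> P"
proof -
  have *: "a + b \<in> P" if "a \<in> P" "b \<in> P" "b \<noteq> 0" "a / b \<in> R" for a b
  proof -
    have "a / b + 1 \<in> R" using that(4) R_add R_1 by blast
    then have "b * (a / b + 1) \<in> P" using that(2) P_mult_R by blast
    moreover have "b * (a / b + 1) = a + b" using that(3) by (simp add: distrib_left)
    ultimately show ?thesis by simp
  qed
  assume a: "a \<in> P" and b: "b \<in> P"
  show ?thesis
  proof (cases "a = 0 \<or> b = 0")
    case False
    then have "a / b \<in> R \<or> inverse (a / b) \<in> R" using R_or_inverse_R[of "a / b"] by simp
    then show ?thesis
    proof
      assume "a / b \<in> R"
      then show ?thesis using *[OF a b] False by blast
    next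
      assume "inverse (a / b) \<in> R"
      then show ?thesis using *[OF b a] False by (simp add: add.commute)
    qed
  qed (use a b in auto)
qed

lemma P_diff: "a \<in> P \<Longrightarrow> b \<in> P \<Longrightarrow> a - b \<in> P"
  using P_add[of a "- b"] P_uminus[of b] by simp

lemma P_sum: "(\<And>i. i \<in> I \<Longrightarrow> f i \<in> P) \<Longrightarrow> sum f I \<in> P"
  by (rule sum_closed) (auto intro: P_0 P_add)

lemma P_power: "w \<in> P \<Longrightarrow> 1 \<le> n \<Longrightarrow> w ^ n \<in> P"
  using P_mult_R[OF _ R_power[OF P_subset_R], of w w "n - 1"] by (cases n) simp_all

lemma unit_add_P: "ring_unit R u \<Longrightarrow> p \<in> P \<Longrightarrow> ring_unit R (u + p)"
proof (rule unit_if_notin_P)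
  assume u: "ring_unit R u" and p: "p \<in> P"
  show "u + p \<in> R" using u p unit_in_R P_subset_R R_add by blast
  show "u + p \<notin> P" using P_diff[of "u + p" p] p u unit_notin_P by auto
qed

lemma inverse_in_P: "z \<notin> R \<Longrightarrow> inverse z \<in> P"
  using R_or_inverse_R[of z] R_0 by (auto simp: mem_P)

lemma poly_unit_at_P: "poly_over K p \<Longrightarrow> y \<in> P \<Longrightarrow> coeff p 0 \<noteq> 0 \<Longrightarrow> ring_unit R (poly p y)"
proof (cases p)
  case (pCons a q)
  assume "poly_over K p" "y \<in> P" "coeff p 0 \<noteq> 0"
  then have "ring_unit R a" "y * poly q y \<in> P"
    using pCons unit_K P_mult_R R_poly_K P_subset_R by (auto simp: poly_over_pCons)
  then show ?thesis using pCons unit_add_P by simp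
qed

lemma poly_no_const_factor: "poly_over K p \<Longrightarrow> coeff p 0 = 0 \<Longrightarrow> y \<in> R \<Longrightarrow> \<exists>w\<in>R. poly p y = y * w"
  using R_poly_K by (cases p) (auto simp: poly_over_pCons)

lemma chain_quotient_in_P:
  assumes nz: "\<forall>i<n. x i \<noteq> 0" and ch: "\<forall>i. Suc i < n \<longrightarrow> (\<exists>p\<in>P. x i = x (Suc i) * p)"
  shows "i < j \<Longrightarrow> j < n \<Longrightarrow> x i / x j \<in> P"
proof (induction j)
  case (Suc j)
  obtain p where p: "p \<in> P" "x j = x (Suc j) * p" using ch Suc by auto
  have pj: "x j / x (Suc j) = p" using p nz Suc by auto
  show ?case
  proof (cases "i = j")
    case False
    then have "x i / x j \<in> P" using Suc.IH Suc.prems by simp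
    then have "(x i / x j) * p \<in> P" using P_mult_R p(1) P_subset_R by blast
    moreover have "x i / x (Suc j) = (x i / x j) * p" using nz Suc pj by (auto simp: field_simps)
    ultimately show ?thesis by simp
  qed (use pj p in simp)
qed simp

text \<open>If \<open>z\<close> were a pole, then \<open>1/z \<in> P\<close> would be a root of the reflected polynomial,
  whose nonzero constant term would then lie in \<open>P\<close>.\<close>

lemma algebraic_in_R:
  assumes L: "L \<subseteq> R" "\<And>a. a \<in> L \<Longrightarrow> a \<noteq> 0 \<Longrightarrow> ring_unit R a" "0 \<in> L"
    and p: "poly_over L p" "p \<noteq> 0" "poly p z = 0"
  shows "z \<in> R"
proof (rule ccontr)
  assume "z \<notin> R"
  then have w: "inverse z \<in> P" "inverse z \<noteq> 0" "z \<noteq> 0" using inverse_in_P R_0 by auto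
  have "poly (reflect_poly p) (inverse z) = 0"
    using poly_reflect_poly_nz[OF w(2), of p] p(3) by simp
  moreover have "reflect_poly p \<noteq> 0" using p(2) by simp
  ultimately obtain a q where aq: "a \<in> L" "a \<noteq> 0" "poly_over L q" "a = - (inverse z * poly q (inverse z))"
    using root_relation_nonzero_const[OF poly_over_reflect[OF L(3) p(1)] _ _ w(2)] by blast
  have "poly q (inverse z) \<in> R" using R_poly[OF poly_over_mono[OF L(1) aq(3)]] w P_subset_R by blast
  then have "a \<in> P" using aq(4) P_uminus P_mult_R[OF w(1)] by simp
  then show False using L(2)[OF aq(1,2)] unit_notin_P by blast
qed

end

text \<open>All finiteness statements about \<open>R\<close> below are dimension counts against \<open>card C\<close>.\<close>

locale valring_param = valring +
  fixes y and C
  assumes y_P: "y \<in> P" and y_nz: "y \<noteq> 0" and C_fin: "finite C"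
    and C_span: "\<forall>z. z \<in> span_over (field_adj K y) C"
begin

lemma K_poly_relation:
  assumes I: "finite I" "card I > card C"
  shows "\<exists>r. (\<forall>i\<in>I. poly_over K (r i)) \<and> (\<exists>i\<in>I. poly (r i) y \<noteq> 0) \<and> (\<Sum>i\<in>I. poly (r i) y * ws i) = 0"
proof -
  obtain c where c: "\<forall>i\<in>I. c i \<in> field_adj K y" "\<exists>i\<in>I. c i \<noteq> 0" "(\<Sum>i\<in>I. c i * ws i) = 0"
    using span_over_dependent[OF subfield_field_adj C_fin I, of ws] C_span by blast
  have "\<forall>i\<in>I. \<exists>p q. c i = poly p y / poly q y \<and> poly_over K p \<and> poly_over K q \<and> poly q y \<noteq> 0"
    using c(1) field_adj_subset_rat_exprs[OF subfield_K] unfolding rat_exprs_def by blast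
  then obtain p q where pq: "\<And>i. i\<in>I \<Longrightarrow> c i = poly (p i) y / poly (q i) y \<and> poly_over K (p i) \<and> poly_over K (q i) \<and> poly (q i) y \<noteq> 0"
    by metis
  define r where "r i = p i * (\<Prod>j\<in>I-{i}. q j)" for i
  define D where "D = (\<Prod>j\<in>I. poly (q j) y)"
  have D: "D \<noteq> 0" using pq I by (simp add: D_def)
  have rc: "poly (r i) y = c i * D" if "i \<in> I" for i
  proof -
    have "D = poly (q i) y * (\<Prod>j\<in>I-{i}. poly (q j) y)" unfolding D_def using that I by (simp add: prod.remove)
    then show ?thesis using pq[OF that] by (simp add: r_def poly_prod)
  qed
  have "\<forall>i\<in>I. poly_over K (r i)" unfolding r_def using pq by (auto intro!: poly_over_subfield_mult[OF subfield_K] poly_over_subfield_prod[OF subfield_K])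
  moreover have "\<exists>i\<in>I. poly (r i) y \<noteq> 0" using c(2) rc D by auto
  moreover have "(\<Sum>i\<in>I. poly (r i) y * ws i) = D * (\<Sum>i\<in>I. c i * ws i)"
    by (simp add: rc sum_distrib_left mult_ac)
  ultimately show ?thesis using c(3) by auto
qed

lemma K_poly_relation_const:
  assumes I: "finite I" "card I > card C"
  shows "\<exists>r. (\<forall>i\<in>I. poly_over K (r i)) \<and> (\<exists>i\<in>I. coeff (r i) 0 \<noteq> 0) \<and> (\<Sum>i\<in>I. poly (r i) y * ws i) = 0"
proof -
  define Q where "Q r \<longleftrightarrow> (\<forall>i\<in>I. poly_over K (r i)) \<and> (\<exists>i\<in>I. poly (r i) y \<noteq> 0) \<and> (\<Sum>i\<in>I. poly (r i) y * ws i) = 0" for r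
  obtain r0 where "Q r0" using K_poly_relation[OF I, of ws] Q_def by blast
  then obtain r where r: "Q r" and rmin: "\<And>r'. Q r' \<Longrightarrow> (\<Sum>i\<in>I. degree (r i)) \<le> (\<Sum>i\<in>I. degree (r' i))"
    using ex_has_least_nat[of Q r0 "\<lambda>r. \<Sum>i\<in>I. degree (r i)"] by blast
  show ?thesis
  proof (cases "\<exists>i\<in>I. coeff (r i) 0 \<noteq> 0")
    case True then show ?thesis using r Q_def by blast
  next
    case False
    have "\<forall>i\<in>I. \<exists>s. r i = pCons 0 s \<and> poly_over K s"
    proof
      fix i assume i: "i \<in> I"
      obtain a s where "r i = pCons a s" by (cases "r i")
      then show "\<exists>s. r i = pCons 0 s \<and> poly_over K s" using False i r Q_def by (auto simp: poly_over_pCons)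
    qed
    then obtain s where s: "\<And>i. i \<in> I \<Longrightarrow> r i = pCons 0 (s i) \<and> poly_over K (s i)" by metis
    have ps: "poly (r i) y = y * poly (s i) y" if "i \<in> I" for i using s[OF that] by simp
    obtain i0 where i0: "i0 \<in> I" "poly (r i0) y \<noteq> 0" using r Q_def by blast
    have "Q s"
    proof -
      have "y * (\<Sum>i\<in>I. poly (s i) y * ws i) = (\<Sum>i\<in>I. poly (r i) y * ws i)"
        by (simp add: sum_distrib_left ps mult_ac)
      then have "(\<Sum>i\<in>I. poly (s i) y * ws i) = 0" using r y_nz Q_def by simp
      moreover have "poly (s i0) y \<noteq> 0" using ps i0 by auto
      ultimately show ?thesis using s i0 Q_def by blast
    qed
    moreover have "(\<Sum>i\<in>I. degree (s i)) < (\<Sum>i\<in>I. degree (r i))"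
    proof (rule sum_strict_mono_ex1[OF I(1)])
      show "\<forall>i\<in>I. degree (s i) \<le> degree (r i)" using s by auto
      have "s i0 \<noteq> 0" using ps i0 by auto
      then show "\<exists>i\<in>I. degree (s i) < degree (r i)" using s i0 by (intro bexI[OF _ i0(1)]) auto
    qed
    ultimately show ?thesis using rmin by fastforce
  qed
qed

lemma divisor_chain_bounded:
  assumes n: "n > card C" and x0: "x 0 = y" and xP: "\<forall>i<n. x i \<in> P"
    and ch: "\<forall>i. Suc i < n \<longrightarrow> (\<exists>p\<in>P. x i = x (Suc i) * p)"
  shows False
proof -
  have xnz: "x i \<noteq> 0" if "i < n" for i using that
  proof (induction i)
    case 0 thus ?case using x0 y_nz by simp
  next
    case (Suc i) then obtain p where "x i = x (Suc i) * p" using ch by auto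
    with Suc show ?case by auto
  qed
  have quot: "x i / x j \<in> P" if "i < j" "j < n" for i j
    using chain_quotient_in_P[OF _ ch that] xnz by blast
  have yx: "y / x j \<in> R" if "j < n" for j
  proof (cases "j = 0")
    case True then show ?thesis using x0 y_nz R_1 by simp
  next
    case False then show ?thesis using quot[of 0 j] that x0 P_subset_R by auto
  qed
  txt \<open>In a \<open>K[y]\<close>-relation among the \<open>x i\<close>, the coefficient at the last index \<open>M\<close> with a
    nonzero constant term is a unit, yet the relation expresses it as an element of \<open>P\<close>.\<close>
  obtain r where r: "\<forall>i\<in>{..<n}. poly_over K (r i)" "\<exists>i\<in>{..<n}. coeff (r i) 0 \<noteq> 0"
      "(\<Sum>i\<in>{..<n}. poly (r i) y * x i) = 0"
    using K_poly_relation_const[of "{..<n}" x] n by auto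
  define S where "S = {i. i < n \<and> coeff (r i) 0 \<noteq> 0}"
  have Sfin: "finite S" "S \<noteq> {}" using r(2) by (auto simp: S_def)
  define M where "M = Max S"
  have M: "M < n" "coeff (r M) 0 \<noteq> 0" using Max_in[OF Sfin] by (auto simp: M_def S_def)
  have Mmax: "i \<le> M" if "i < n" "coeff (r i) 0 \<noteq> 0" for i
    using Max_ge[OF Sfin(1)] that by (auto simp: M_def S_def)
  define c where "c i = poly (r i) y" for i
  have cu: "ring_unit R (c M)" unfolding c_def using poly_unit_at_P r M y_P by auto
  have cR: "c i \<in> R" if "i < n" for i unfolding c_def using R_poly_K r that y_P P_subset_R by auto
  have xM: "x M \<noteq> 0" using xnz M by auto
  have "c M * x M + (\<Sum>i\<in>{..<n}-{M}. c i * x i) = 0"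
    using r(3) M by (simp add: c_def sum.remove)
  then have "c M * x M = - (\<Sum>i\<in>{..<n}-{M}. c i * x i)" by (simp add: eq_neg_iff_add_eq_0)
  then have "c M = - (\<Sum>i\<in>{..<n}-{M}. c i * x i) / x M" using xM by (metis nonzero_mult_div_cancel_right minus_divide_left)
  also have "\<dots> = - (\<Sum>i\<in>{..<n}-{M}. c i * (x i / x M))"
    by (simp add: sum_divide_distrib)
  finally have cM: "c M = - (\<Sum>i\<in>{..<n}-{M}. c i * (x i / x M))" .
  have "(\<Sum>i\<in>{..<n}-{M}. c i * (x i / x M)) \<in> P"
  proof (rule P_sum)
    fix i assume i: "i \<in> {..<n}-{M}"
    show "c i * (x i / x M) \<in> P"
    proof (cases "i < M")
      case True
      then have "x i / x M \<in> P" "c i \<in> R" using quot M i cR by auto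
      then show ?thesis using R_mult_P by blast
    next
      case False
      then have "coeff (r i) 0 = 0" using Mmax i by force
      then obtain w where w: "w \<in> R" "c i = y * w" using poly_no_const_factor r i y_P P_subset_R unfolding c_def by blast
      have "c i * (x i / x M) = (w * (y / x M)) * x i" using w xM by (simp add: field_simps)
      moreover have "w * (y / x M) \<in> R" using w yx M R_mult by blast
      moreover have "x i \<in> P" using xP i by auto
      ultimately show ?thesis using R_mult_P by metis
    qed
  qed
  then have "c M \<in> P" using cM P_uminus by simp
  then show False using cu unit_notin_P by blast
qed

lemma P_principal: "\<exists>t\<in>P. P = {t * u | u. u \<in> R}"
proof (rule ccontr)
  assume np: "\<not> ?thesis"
  have step: "\<exists>z. z \<in> P \<and> z \<noteq> 0 \<and> (\<exists>p\<in>P. a = z * p)" if a: "a \<in> P" "a \<noteq> 0" for a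
  proof -
    have "P \<noteq> {a * u | u. u \<in> R}" using np a by blast
    moreover have "{a * u | u. u \<in> R} \<subseteq> P" using P_mult_R a by auto
    ultimately obtain z where z: "z \<in> P" "z \<notin> {a * u | u. u \<in> R}" by blast
    have znz: "z \<noteq> 0" using z R_0 by (metis (mono_tags, lifting) mem_Collect_eq mult_zero_right)
    have "z / a \<notin> R"
    proof
      assume "z / a \<in> R"
      moreover have "z = a * (z / a)" using a by simp
      ultimately show False using z by blast
    qed
    then have aR: "a / z \<in> R" using R_or_inverse_R[of "z / a"] a(2) znz by auto
    have "a / z \<in> P"
    proof (rule ccontr)
      assume "a / z \<notin> P"
      then have "inverse (a / z) \<in> R" using aR by (simp add: mem_P)
      then show False using \<open>z / a \<notin> R\<close> by simp
    qed
    moreover have "a = z * (a / z)" using znz by simp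
    ultimately show ?thesis using z znz by blast
  qed
  then obtain nx where nx: "\<And>a. a \<in> P \<Longrightarrow> a \<noteq> 0 \<Longrightarrow> nx a \<in> P \<and> nx a \<noteq> 0 \<and> (\<exists>p\<in>P. a = nx a * p)"
    by metis
  define x where "x i = (nx ^^ i) y" for i
  have xi: "x i \<in> P \<and> x i \<noteq> 0" for i
    by (induction i) (auto simp: x_def y_P y_nz nx)
  show False
  proof (rule divisor_chain_bounded[of "Suc (card C)" x])
    show "x 0 = y" by (simp add: x_def)
    show "\<forall>i<Suc (card C). x i \<in> P" using xi by auto
    show "\<forall>i. Suc i < Suc (card C) \<longrightarrow> (\<exists>p\<in>P. x i = x (Suc i) * p)"
      using nx xi by (auto simp: x_def)
  qed simp
qed

definition unif where "unif = (SOME t. t \<in> P \<and> P = {t * u | u. u \<in> R})"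

lemma unif: "unif \<in> P" "P = {unif * u | u. u \<in> R}"
  using someI_ex[OF P_principal[unfolded Bex_def]] unfolding unif_def by blast+

lemma unif_R: "unif \<in> R" using unif P_subset_R by blast

lemma unif_nz: "unif \<noteq> 0"
proof
  assume "unif = 0"
  then have "P \<subseteq> {0}" using unif by auto
  then show False using y_P y_nz by auto
qed

definition Ppow :: "nat \<Rightarrow> 'a set" where "Ppow k = {unif ^ k * w | w. w \<in> R}"

lemma Ppow_I: "w \<in> R \<Longrightarrow> unif ^ k * w \<in> Ppow k" unfolding Ppow_def by blast
lemma Ppow_E: "z \<in> Ppow k \<Longrightarrow> \<exists>w\<in>R. z = unif ^ k * w" unfolding Ppow_def by blast
lemma Ppow_0: "0 \<in> Ppow k" using Ppow_I[OF R_0] by simp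
lemma Ppow_mult: "z \<in> Ppow k \<Longrightarrow> r \<in> R \<Longrightarrow> z * r \<in> Ppow k"
proof -
  assume "z \<in> Ppow k" "r \<in> R"
  then obtain w where "w \<in> R" "z = unif ^ k * w" using Ppow_E by blast
  then show ?thesis using Ppow_I[of "w * r" k] R_mult \<open>r \<in> R\<close> by (simp add: mult.assoc)
qed
lemma Ppow_add: "a \<in> Ppow k \<Longrightarrow> b \<in> Ppow k \<Longrightarrow> a + b \<in> Ppow k"
proof -
  assume "a \<in> Ppow k" "b \<in> Ppow k"
  then obtain v w where "v \<in> R" "w \<in> R" "a = unif ^ k * v" "b = unif ^ k * w" by (auto simp: Ppow_def)
  then show ?thesis using Ppow_I[of "v + w" k] R_add by (simp add: distrib_left)
qed
lemma Ppow_uminus: "a \<in> Ppow k \<Longrightarrow> - a \<in> Ppow k"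
  using Ppow_mult[of a k "-1"] R_uminus[OF R_1] by simp

lemma unif_power_in_P: "k \<ge> 1 \<Longrightarrow> unif ^ k \<in> P"
proof -
  assume "k \<ge> 1"
  then obtain m where "k = Suc m" by (cases k) auto
  then show ?thesis using P_mult_R[OF unif(1) R_power[OF unif_R, of m]] by simp
qed

lemma y_Ppow_bound: "y \<in> Ppow k \<Longrightarrow> k \<le> card C"
proof (rule ccontr)
  assume yk: "y \<in> Ppow k" and "\<not> k \<le> card C"
  then have k: "k > card C" by simp
  obtain u where u: "u \<in> R" "y = unif ^ k * u" using Ppow_E[OF yk] by blast
  define x where "x j = (if j = 0 then y else unif ^ (k - j))" for j
  show False
  proof (rule divisor_chain_bounded[of k x])
    show "card C < k" by (rule k)
    show "x 0 = y" by (simp add: x_def)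
    show "\<forall>i<k. x i \<in> P" using y_P unif_power_in_P by (auto simp: x_def)
    show "\<forall>i. Suc i < k \<longrightarrow> (\<exists>p\<in>P. x i = x (Suc i) * p)"
    proof (intro allI impI)
      fix i assume i: "Suc i < k"
      show "\<exists>p\<in>P. x i = x (Suc i) * p"
      proof (cases "i = 0")
        case True
        obtain k' where k': "k = Suc k'" using i by (cases k) auto
        have "y = unif ^ (k - 1) * (unif * u)" using u k' by (simp add: mult_ac)
        moreover have "unif * u \<in> P" using P_mult_R unif u by blast
        ultimately show ?thesis using True by (auto simp: x_def)
      next
        case False
        have "k - i = Suc (k - Suc i)" using i by simp
        then have "unif ^ (k - i) = unif ^ (k - Suc i) * unif" by (simp add: mult_ac)
        then show ?thesis using False unif by (auto simp: x_def)
      qed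
    qed
  qed
qed

lemma Ppow_if_no_unit_form:
  assumes z: "z \<in> R" "z \<noteq> 0" and nf: "\<not> (\<exists>k u. ring_unit R u \<and> z = unif ^ k * u)"
  shows "z \<in> Ppow k"
proof (induction k)
  case 0 then show ?case using Ppow_I[OF z(1), of 0] by simp
next
  case (Suc k)
  then obtain w where w: "w \<in> R" "z = unif ^ k * w" using Ppow_E by blast
  have "w \<in> P" using nf w unit_if_notin_P by blast
  then obtain v where v: "v \<in> R" "w = unif * v" using unif by auto
  have "z = unif ^ Suc k * v" using w v by (simp add: mult_ac)
  then show ?case using Ppow_I[OF v(1), of "Suc k"] by simp
qed

lemma y_unit_form: "\<exists>e u. ring_unit R u \<and> y = unif ^ e * u"
  using Ppow_if_no_unit_form[OF P_subset_R[OF y_P] y_nz] y_Ppow_bound[of "Suc (card C)"] by force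

lemma poly_y_unit_form: "poly_over K p \<Longrightarrow> poly p y \<noteq> 0 \<Longrightarrow> \<exists>k u. ring_unit R u \<and> poly p y = unif ^ k * u"
proof (induction p)
  case 0 then show ?case by simp
next
  case (pCons a p)
  show ?case
  proof (cases "a = 0")
    case False
    have "ring_unit R (poly (pCons a p) y)" by (rule poly_unit_at_P[OF pCons.prems(1) y_P]) (simp add: False)
    moreover have "poly (pCons a p) y = unif ^ 0 * poly (pCons a p) y" by simp
    ultimately show ?thesis by blast
  next
    case True
    then have e: "poly (pCons a p) y = y * poly p y" by simp
    then have "poly p y \<noteq> 0" "poly_over K p" using pCons by (auto simp: poly_over_pCons)
    then obtain k u where ku: "ring_unit R u" "poly p y = unif ^ k * u" using pCons by blast
    obtain e v where ev: "ring_unit R v" "y = unif ^ e * v" using y_unit_form by blast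
    have "poly (pCons a p) y = unif ^ (e + k) * (v * u)" using e ku ev by (simp add: power_add mult_ac)
    then show ?thesis using unit_mult ku ev by blast
  qed
qed

lemma Ppow_Inter_trivial:
  assumes z: "z \<in> R" "z \<noteq> 0" and small: "\<forall>k. z \<in> Ppow k"
  shows False
proof -
  define Ky where "Ky = {poly r y | r. poly_over K r}"
  have Ky_R: "Ky \<subseteq> R" using R_poly_K y_P P_subset_R by (auto simp: Ky_def)
  obtain r where r: "\<forall>i\<in>{..card C}. poly_over K (r i)" "\<exists>i\<in>{..card C}. poly (r i) y \<noteq> 0"
      "(\<Sum>i\<le>card C. poly (r i) y * z ^ i) = 0"
    using K_poly_relation[of "{..card C}" "\<lambda>i. z ^ i"] by auto
  have "0 \<in> Ky" using poly_over_0[OF K_0] unfolding Ky_def by force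
  moreover have "\<forall>i\<le>card C. poly (r i) y \<in> Ky" using r(1) by (auto simp: Ky_def)
  ultimately obtain p where "p \<noteq> 0" "poly_over Ky p" "poly p z = 0"
    using poly_of_relation[of Ky "card C" "\<lambda>i. poly (r i) y"] r(2,3) by auto
  then obtain a q where aq: "a \<in> Ky" "a \<noteq> 0" "poly_over Ky q" "a = - (z * poly q z)"
    using root_relation_nonzero_const z(2) by blast
  obtain m u where mu: "ring_unit R u" "a = unif ^ m * u"
    using aq(1,2) poly_y_unit_form unfolding Ky_def by blast
  have "poly q z \<in> R" using R_poly[OF poly_over_mono[OF Ky_R aq(3)] z(1)] .
  then have "unif ^ m * u \<in> Ppow (Suc m)"
    using aq(4) mu(2) small Ppow_mult Ppow_uminus by metis
  then obtain w where "w \<in> R" "unif ^ m * u = unif ^ Suc m * w" using Ppow_E by blast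
  then have "u \<in> P" using unif_nz P_mult_R[OF unif(1)] by (simp add: mult.assoc)
  then show False using mu unit_notin_P by blast
qed

lemma unit_form_R: "z \<in> R \<Longrightarrow> z \<noteq> 0 \<Longrightarrow> \<exists>k u. ring_unit R u \<and> z = unif ^ k * u"
  using Ppow_if_no_unit_form Ppow_Inter_trivial by blast

lemma unit_form: "z \<noteq> 0 \<Longrightarrow> \<exists>n u. ring_unit R u \<and> z = unif powi n * u"
proof (cases "z \<in> R")
  case True
  assume "z \<noteq> 0"
  then obtain k u where "ring_unit R u" "z = unif ^ k * u" using unit_form_R True by blast
  then show ?thesis by (intro exI[of _ "int k"] exI[of _ u]) auto
next
  case False
  then have iz: "inverse z \<in> R" "inverse z \<noteq> 0" using inverse_in_P P_subset_R R_0 by auto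
  then obtain k u where ku: "ring_unit R u" "inverse z = unif ^ k * u" using unit_form_R by blast
  then have "z = unif powi (- int k) * inverse u"
    by (metis inverse_inverse_eq inverse_mult_distrib mult.commute power_int_minus power_int_of_nat)
  then show ?thesis using unit_inverse ku by blast
qed

lemma unif_powi_unit_imp_0: "ring_unit R (unif powi k) \<Longrightarrow> k = 0"
proof (rule ccontr)
  assume u: "ring_unit R (unif powi k)" and k: "k \<noteq> 0"
  show False
  proof (cases "k > 0")
    case True
    then have "unif powi k = unif ^ nat k" by (simp add: power_int_def)
    then have "unif powi k \<in> P" using unif_power_in_P True by simp
    then show False using u unit_notin_P by blast
  next
    case False
    then have "unif powi k = inverse (unif ^ nat (- k))" by (simp add: power_int_def power_inverse)
    then have "ring_unit R (unif ^ nat (- k))" using unit_inverse[OF u] by simp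
    moreover have "unif ^ nat (- k) \<in> P" using unif_power_in_P False k by simp
    ultimately show False using unit_notin_P by blast
  qed
qed

lemma P_generator: "P = {t * v | v. v \<in> R} \<Longrightarrow> t \<in> R \<Longrightarrow> \<exists>a. ring_unit R a \<and> t = unif * a"
proof -
  assume Pt: "P = {t * v | v. v \<in> R}" and Ppow: "t \<in> R"
  have "t \<in> P" using Pt R_1 by (auto intro!: exI[of _ 1])
  then obtain a where a: "a \<in> R" "t = unif * a" using unif by auto
  have "unif \<in> {t * v | v. v \<in> R}" using unif Pt by blast
  then obtain b where b: "b \<in> R" "unif = t * b" by blast
  then have "unif = unif * (a * b)" using a by (simp add: mult.assoc)
  then have "a * b = 1" using unif_nz by simp
  then have "inverse a = b" by (rule inverse_unique)
  then have "ring_unit R a" using a b \<open>a * b = 1\<close> by (auto simp: ring_unit_def)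
  then show ?thesis using a by blast
qed

lemma val_char:
  assumes u: "ring_unit R u" and z: "z = unif powi n * u"
  shows "val R z = n"
proof -
  have znz: "z \<noteq> 0" using z u unif_nz by (auto simp: ring_unit_def)
  have pn: "z * unif powi (- n) = u" using z unif_nz by (simp add: power_int_minus)
  show ?thesis unfolding val_def if_not_P[OF znz]
  proof (rule the_equality)
    show "\<exists>t\<in>R. P = {t * y |y. y \<in> R} \<and> z * t powi (- n) \<in> R \<and> inverse (z * t powi (- n)) \<in> R"
      using unif unif_R pn u by (intro bexI[of _ unif]) (auto simp: ring_unit_def)
  next
    fix m assume "\<exists>t\<in>R. P = {t * y |y. y \<in> R} \<and> z * t powi (- m) \<in> R \<and> inverse (z * t powi (- m)) \<in> R"
    then obtain t where t: "t \<in> R" "P = {t * y |y. y \<in> R}" "z * t powi (- m) \<in> R" "inverse (z * t powi (- m)) \<in> R"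
      by blast
    obtain a where a: "ring_unit R a" "t = unif * a" using P_generator t by blast
    have anz: "a \<noteq> 0" using a by (simp add: ring_unit_def)
    have "z * t powi (- m) = unif powi (n - m) * (u * a powi (- m))"
      using z a unif_nz anz by (simp add: power_int_mult_distrib power_int_diff power_int_minus field_simps)
    moreover have "ring_unit R (z * t powi (- m))" using t znz unif_nz a by (auto simp: ring_unit_def)
    moreover have "ring_unit R (u * a powi (- m))" using unit_mult unit_powi u a by blast
    ultimately have "ring_unit R (unif powi (n - m))"
      using unit_mult[OF _ unit_inverse] unit_nonzero
      by (metis (no_types, lifting) mult.assoc mult.right_neutral right_inverse)
    then have "n - m = 0" by (rule unif_powi_unit_imp_0)
    then show "m = n" by simp
  qed
qed

end
section \<open>Every valuation ring has a parameter\<close>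

text \<open>A nonzero \<open>v\<close> is algebraic over \<open>L\<close>, and a relation \<open>a + v q(v) = 0\<close> with \<open>a \<noteq> 0\<close>
  inverts it inside the span.\<close>

lemma subfield_span_over:
  assumes L: "subfield L" and E: "finite E" and one: "1 \<in> span_over L E"
    and mult: "\<And>u v. u \<in> span_over L E \<Longrightarrow> v \<in> span_over L E \<Longrightarrow> u * v \<in> span_over L E"
  shows "subfield (span_over L E)"
proof -
  let ?V = "span_over L E"
  have LV: "a \<in> ?V" if "a \<in> L" for a using span_over_smult[OF L that one] by simp
  have inv: "inverse v \<in> ?V" if v: "v \<in> ?V" "v \<noteq> 0" for v
  proof -
    have "v ^ k \<in> ?V" for k by (induction k) (use one mult v in auto)
    then obtain p where "p \<noteq> 0" "poly_over L p" "poly p v = 0" using powers_algebraic[OF L E] by blast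
    then obtain a q where aq: "a \<in> L" "a \<noteq> 0" "poly_over L q" "a = - (v * poly q v)"
      using root_relation_nonzero_const v(2) by blast
    have "poly q v \<in> ?V"
      using poly_over_mono[OF _ aq(3), of ?V] LV v(1)
      by (intro poly_closed) (auto intro: span_over_0[OF L] span_over_add[OF L] mult)
    moreover have "inverse v = - inverse a * poly q v" using aq v(2) by (simp add: field_simps)
    moreover have "- inverse a \<in> L" using subfield_uminus[OF L] subfield_inverse[OF L] aq(1) by blast
    ultimately show ?thesis using span_over_smult[OF L, of "- inverse a" "poly q v"] by simp
  qed
  have "- v \<in> ?V" if "v \<in> ?V" for v
    using span_over_smult[OF L subfield_uminus[OF L subfield_1[OF L]] that] by simp
  then show ?thesis unfolding subfield_def
    using span_over_0[OF L] one span_over_add[OF L] mult inv by simp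
qed

text \<open>If \<open>p\<close> is monic of degree \<open>d\<close>, then \<open>x\<^sup>d \<equiv> y\<close> modulo lower powers of \<open>x\<close>, where \<open>y = p(x)\<close>,
  so \<open>1, x, \<dots>, x\<^sup>d\<^sup>-\<^sup>1\<close> span a ring over \<open>K(y)\<close>, which is then a field containing \<open>K(x)\<close>.\<close>

lemma field_adj_subset_span_powers:
  assumes K: "subfield K" and p: "poly_over K p" "1 \<le> degree p" "lead_coeff p = 1"
  shows "field_adj K x \<subseteq> span_over (field_adj K (poly p x)) ((\<lambda>j. x ^ j) ` {..<degree p})"
proof -
  define d where "d = degree p"
  define y where "y = poly p x"
  define L where "L = field_adj K y"
  define E where "E = (\<lambda>j. x ^ j) ` {..<d}"
  define V where "V = span_over L E"
  have L: "subfield L" "K \<subseteq> L" "y \<in> L"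
    by (simp_all add: L_def subfield_field_adj subset_field_adj mem_field_adj)
  have E: "finite E" by (simp add: E_def)
  have pw: "x ^ j \<in> V" if "j < d" for j
    unfolding V_def by (rule span_over_base[OF L(1) E]) (use that in \<open>simp add: E_def\<close>)
  have one: "1 \<in> V" using pw[of 0] p(2) by (simp add: d_def)
  have LV: "a \<in> V" if "a \<in> L" for a using span_over_smult[OF L(1) that one[unfolded V_def]] by (simp add: V_def)
  have xd: "x ^ d \<in> V"
  proof -
    have "y = (\<Sum>i<Suc d. coeff p i * x ^ i)" by (simp add: y_def d_def poly_altdef lessThan_Suc_atMost)
    also have "\<dots> = (\<Sum>i<d. coeff p i * x ^ i) + x ^ d" using p(3) by (simp add: d_def)
    finally have "x ^ d = y - (\<Sum>i<d. coeff p i * x ^ i)" by simp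
    moreover have "(\<Sum>i<d. coeff p i * x ^ i) \<in> V" unfolding V_def
      using pw poly_over_coeff[OF p(1)] L by (auto intro!: span_over_sum span_over_smult simp: V_def)
    ultimately show ?thesis using LV[OF L(3)] span_over_diff[OF L(1)] by (simp add: V_def)
  qed
  have xmul: "v * x \<in> V" if "v \<in> V" for v
    unfolding V_def
  proof (rule span_over_times[OF L(1) that[unfolded V_def]])
    fix e assume "e \<in> E"
    then obtain j where j: "j < d" "e = x ^ j" by (auto simp: E_def)
    have "x ^ Suc j \<in> V"
    proof (cases "Suc j < d")
      case False
      then have "Suc j = d" using j by simp
      then show ?thesis using xd by simp
    qed (rule pw)
    then show "e * x \<in> span_over L E" using j by (simp add: V_def mult.commute)
  qed
  have xpmul: "v * x ^ j \<in> V" if "v \<in> V" for v j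
  proof (induction j)
    case (Suc j)
    then have "(v * x ^ j) * x \<in> V" by (rule xmul)
    then show ?case by (simp add: mult_ac)
  qed (use that in simp)
  have mul: "u * v \<in> V" if "u \<in> V" "v \<in> V" for u v
  proof -
    have "v * u \<in> V" unfolding V_def
    proof (rule span_over_times[OF L(1) that(2)[unfolded V_def]])
      fix e assume "e \<in> E"
      then obtain j where j: "j < d" "e = x ^ j" by (auto simp: E_def)
      show "e * u \<in> span_over L E" using xpmul[OF that(1), of j] j by (simp add: V_def mult.commute)
    qed
    then show ?thesis by (simp add: mult.commute)
  qed
  have "subfield V" unfolding V_def by (rule subfield_span_over[OF L(1) E]) (use one mul in \<open>simp_all add: V_def\<close>)
  moreover have "x \<in> V" using xpmul[OF one, of 1] by simp
  ultimately have "field_adj K x \<subseteq> V" using field_adj_least L(2) LV by blast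
  then show ?thesis by (simp add: V_def L_def E_def y_def d_def)
qed

lemma finite_over_poly_value:
  assumes K: "subfield K" and B: "finite B" "\<forall>z. z \<in> span_over (field_adj K x) B"
    and p: "poly_over K p" "1 \<le> degree p" "lead_coeff p = 1"
  shows "\<exists>C. finite C \<and> (\<forall>z. z \<in> span_over (field_adj K (poly p x)) C)"
proof -
  define L where "L = field_adj K (poly p x)"
  define E where "E = (\<lambda>j. x ^ j) ` {..<degree p}"
  define C where "C = (\<lambda>(j, b). x ^ j * b) ` ({..<degree p} \<times> B)"
  have L: "subfield L" by (simp add: L_def subfield_field_adj)
  have C: "finite C" using B(1) by (simp add: C_def)
  have "z \<in> span_over L C" for z
  proof -
    obtain c where c: "z = (\<Sum>b\<in>B. c b * b)" "\<forall>b\<in>B. c b \<in> field_adj K x"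
      using B(2) unfolding span_over_def by blast
    have "c b * b \<in> span_over L C" if "b \<in> B" for b
    proof (rule span_over_times[OF L])
      show "c b \<in> span_over L E"
        using c(2) that field_adj_subset_span_powers[OF K p] by (auto simp: L_def E_def)
      fix e assume "e \<in> E"
      then have "e * b \<in> C" using that by (force simp: C_def E_def)
      then show "e * b \<in> span_over L C" by (rule span_over_base[OF L C])
    qed
    then show ?thesis using c(1) by (auto intro: span_over_sum[OF L])
  qed
  then show ?thesis using C by (auto simp: L_def)
qed

context valring
begin

lemma exists_poly_value_in_P:
  assumes x: "x \<in> R" and B: "finite B" "\<forall>z. z \<in> span_over (field_adj K x) B"
  shows "\<exists>p. poly_over K p \<and> poly p x \<in> P \<and> poly p x \<noteq> 0"
proof (rule ccontr)
  assume none: "\<not> ?thesis"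
  have unit: "ring_unit R (poly p x)" if "poly_over K p" "poly p x \<noteq> 0" for p
    using none that R_poly_K x unit_if_notin_P by blast
  have units: "a \<in> R \<and> (a \<noteq> 0 \<longrightarrow> ring_unit R a)" if a: "a \<in> field_adj K x" for a
  proof -
    obtain p q where pq: "a = poly p x / poly q x" "poly_over K p" "poly_over K q" "poly q x \<noteq> 0"
      using a field_adj_subset_rat_exprs[OF subfield_K] unfolding rat_exprs_def by blast
    have qu: "ring_unit R (inverse (poly q x))" using unit pq unit_inverse by blast
    show ?thesis
    proof (cases "poly p x = 0")
      case False
      then have "ring_unit R a" using unit[OF pq(2) False] qu unit_mult pq(1) by (simp add: divide_inverse)
      then show ?thesis by (simp add: unit_in_R)
    qed (use pq R_0 in simp)
  qed
  txt \<open>Then \<open>R\<close> would contain \<open>K(x)\<close> without nonzero non-units, and hence the whole function field.\<close>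
  obtain z where z: "z \<notin> R" using R_neq_UNIV by auto
  obtain p where "p \<noteq> 0" "poly_over (field_adj K x) p" "poly p z = 0"
    using powers_algebraic[OF subfield_field_adj B(1)] B(2) by blast
  then have "z \<in> R"
    using units subfield_0[OF subfield_field_adj] by (intro algebraic_in_R[of "field_adj K x" p]) auto
  then show False using z by blast
qed

lemma valring_param_exists: "\<exists>y C. valring_param K R y C"
proof -
  obtain x B where B: "finite B" "\<forall>z. z \<in> span_over (field_adj K x) B"
    using exists_finite_span_over_field_adj by blast
  show ?thesis
  proof (cases "x \<in> R")
    case False
    define y where "y = inverse x"
    have y: "y \<in> P" "y \<noteq> 0" using inverse_in_P False R_0 y_def by auto
    have "inverse y \<in> field_adj K y" by (rule subfield_inverse[OF subfield_field_adj mem_field_adj])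
    then have "x \<in> field_adj K y" by (simp add: y_def)
    then have "field_adj K x \<subseteq> field_adj K y"
      by (rule field_adj_least[OF subfield_field_adj subset_field_adj])
    then have "\<forall>z. z \<in> span_over (field_adj K y) B" using B(2) span_over_mono by blast
    then have "valring_param K R y B" using y B(1)
      by (intro valring_param.intro valring_axioms valring_param_axioms.intro) auto
    then show ?thesis by blast
  next
    case True
    then obtain p0 where p0: "poly_over K p0" "poly p0 x \<in> P" "poly p0 x \<noteq> 0"
      using exists_poly_value_in_P B by blast
    have "1 \<le> degree p0"
    proof (rule ccontr)
      assume "\<not> 1 \<le> degree p0"
      then have "degree p0 = 0" by simp
      then have "poly p0 x = coeff p0 0" by (simp add: poly_altdef)
      then have "ring_unit R (poly p0 x)" using unit_K poly_over_coeff[OF p0(1)] p0(3) by simp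
      then show False using p0(2) unit_notin_P by blast
    qed
    define c where "c = inverse (lead_coeff p0)"
    have c: "c \<in> K" "c \<noteq> 0" using poly_over_coeff[OF p0(1)] p0(3) subfield_inverse[OF subfield_K]
      by (auto simp: c_def)
    define p where "p = smult c p0"
    have "poly_over K p"
      unfolding p_def by (rule poly_over_smult[OF _ p0(1)]) (use c subfield_mult[OF subfield_K] in blast)
    moreover have "1 \<le> degree p" "lead_coeff p = 1"
      using c p0(3) \<open>1 \<le> degree p0\<close> by (auto simp: p_def c_def)
    ultimately have p: "poly_over K p" "1 \<le> degree p" "lead_coeff p = 1" by blast+
    have px: "poly p x = c * poly p0 x" by (simp add: p_def)
    have "c \<in> R" using c(1) K_subset_R by blast
    then have "poly p x \<in> P" "poly p x \<noteq> 0" using px R_mult_P[OF _ p0(2)] p0(3) c(2) by simp_all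
    moreover obtain C where "finite C" "\<forall>z. z \<in> span_over (field_adj K (poly p x)) C"
      using finite_over_poly_value[OF subfield_K B p] by blast
    ultimately have "valring_param K R (poly p x) C"
      by (intro valring_param.intro valring_axioms valring_param_axioms.intro) auto
    then show ?thesis by blast
  qed
qed

end

section \<open>The discrete valuation of a place\<close>

context valring
begin

lemma uniformizer:
  obtains t where "t \<in> P" "t \<noteq> 0"
    "\<And>z. z \<noteq> 0 \<Longrightarrow> \<exists>n u. ring_unit R u \<and> z = t powi n * u"
    "\<And>u n. ring_unit R u \<Longrightarrow> val R (t powi n * u) = n"
proof -
  obtain y C where "valring_param K R y C" using valring_param_exists by blast
  then interpret valring_param K R y C .
  show thesis using that[of unif] unif(1) unif_nz unit_form val_char by blast
qed

lemma val_unit: "ring_unit R u \<Longrightarrow> val R u = 0"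
  by (rule uniformizer) (metis power_int_0_right mult_1)

lemma val_mult: "a \<noteq> 0 \<Longrightarrow> b \<noteq> 0 \<Longrightarrow> val R (a * b) = val R a + val R b"
proof -
  assume "a \<noteq> 0" "b \<noteq> 0"
  obtain t where t: "t \<noteq> 0" "\<And>z. z \<noteq> 0 \<Longrightarrow> \<exists>n u. ring_unit R u \<and> z = t powi n * u"
    "\<And>u n. ring_unit R u \<Longrightarrow> val R (t powi n * u) = n"
    by (rule uniformizer) blast
  obtain m n u v where uv: "ring_unit R u" "a = t powi m * u" "ring_unit R v" "b = t powi n * v"
    using t(2) \<open>a \<noteq> 0\<close> \<open>b \<noteq> 0\<close> by metis
  have "a * b = t powi (m + n) * (u * v)" using uv t(1) by (simp add: power_int_add mult_ac)
  moreover have "val R (t powi (m + n) * (u * v)) = m + n" by (rule t(3)[OF unit_mult[OF uv(1,3)]])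
  ultimately have "val R (a * b) = m + n" by simp
  moreover have "val R a = m" "val R b = n" using t(3) uv by simp_all
  ultimately show ?thesis by simp
qed

lemma val_inverse: "a \<noteq> 0 \<Longrightarrow> val R (inverse a) = - val R a"
  using val_mult[of a "inverse a"] val_unit[OF unit_1] by simp

lemma val_power: "a \<noteq> 0 \<Longrightarrow> val R (a ^ n) = int n * val R a"
  by (induction n) (simp_all add: val_unit[OF unit_1] val_mult algebra_simps)

lemma val_nonneg_iff: "z \<noteq> 0 \<Longrightarrow> z \<in> R \<longleftrightarrow> 0 \<le> val R z"
proof -
  assume z: "z \<noteq> 0"
  obtain t where t: "t \<in> P" "t \<noteq> 0" "\<And>z. z \<noteq> 0 \<Longrightarrow> \<exists>n u. ring_unit R u \<and> z = t powi n * u"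
    "\<And>u n. ring_unit R u \<Longrightarrow> val R (t powi n * u) = n"
    by (rule uniformizer) blast
  obtain m u where u: "ring_unit R u" "z = t powi m * u" using t(3) z by metis
  then have m: "val R z = m" using t(4) by simp
  show ?thesis
  proof
    assume "z \<in> R"
    show "0 \<le> val R z"
    proof (rule ccontr)
      assume "\<not> 0 \<le> val R z"
      then have "inverse z = t ^ nat (- m) * inverse u" and "t ^ nat (- m) \<in> P"
        using u m P_power[OF t(1)] by (simp_all add: power_int_def power_inverse mult.commute)
      then have "inverse z \<in> P" using P_mult_R unit_in_R unit_inverse u(1) by simp
      then have "z * inverse z \<in> P" using R_mult_P \<open>z \<in> R\<close> by blast
      then show False using z one_notin_P by simp
    qed
  next
    assume "0 \<le> val R z"
    then have "z = t ^ nat m * u" using u m by (simp add: power_int_def)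
    then show "z \<in> R" using R_mult R_power P_subset_R[OF t(1)] unit_in_R u(1) by simp
  qed
qed

lemma val_pos_iff: "z \<noteq> 0 \<Longrightarrow> z \<in> P \<longleftrightarrow> 1 \<le> val R z"
proof -
  assume z: "z \<noteq> 0"
  have "z \<in> P \<longleftrightarrow> z \<in> R \<and> inverse z \<notin> R" using z by (simp add: mem_P)
  also have "\<dots> \<longleftrightarrow> 0 \<le> val R z \<and> \<not> 0 \<le> - val R z"
    using val_nonneg_iff[OF z] val_nonneg_iff[of "inverse z"] z val_inverse by simp
  finally show ?thesis by linarith
qed

lemma val_uminus: "val R (- a) = val R a"
  using val_mult[of "- 1" a] val_unit[OF unit_K[OF subfield_uminus[OF subfield_K K_1]]]
  by (cases "a = 0") simp_all

lemma val_K: "a \<in> K \<Longrightarrow> a \<noteq> 0 \<Longrightarrow> val R a = 0"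
  using val_unit unit_K by blast

lemma exists_val_1: "\<exists>t. t \<noteq> 0 \<and> val R t = 1"
proof -
  obtain t where "t \<noteq> 0" "\<And>u n. ring_unit R u \<Longrightarrow> val R (t powi n * u) = n" by (rule uniformizer) blast
  then show ?thesis using unit_1 by (metis mult_1_right power_int_1_right)
qed

lemma val_add_ge:
  assumes "a + b \<noteq> 0" "a = 0 \<or> k \<le> val R a" "b = 0 \<or> k \<le> val R b"
  shows "k \<le> val R (a + b)"
proof -
  have *: "val R a \<le> val R (a + b)" if "a \<noteq> 0" "b \<noteq> 0" "a + b \<noteq> 0" "val R a \<le> val R b" for a b
  proof -
    have "val R (b / a) = val R b - val R a" using that val_mult val_inverse by (simp add: divide_inverse)
    then have "b / a \<in> R" using that val_nonneg_iff[of "b / a"] by simp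
    then have "1 + b / a \<in> R" using R_1 R_add by blast
    moreover have "1 + b / a \<noteq> 0" using that by (simp add: field_simps)
    ultimately have "0 \<le> val R (1 + b / a)" using val_nonneg_iff by blast
    moreover have "a + b = a * (1 + b / a)" using that by (simp add: field_simps)
    ultimately show ?thesis using val_mult that \<open>1 + b / a \<noteq> 0\<close> by simp
  qed
  show ?thesis
  proof (cases "a = 0 \<or> b = 0")
    case False
    then show ?thesis using assms *[of a b] *[of b a] by (cases "val R a \<le> val R b") (auto simp: add.commute)
  qed (use assms in auto)
qed

end

section \<open>The residue field\<close>

context valring
begin

definition residue_class :: "'f \<Rightarrow> 'f set" where "residue_class z = {z + p | p. p \<in> P}"

lemma residue_field_eq: "residue_field R = residue_class ` R"
  by (simp add: residue_field_def residue_class_def)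

lemma residue_class_eq_iff: "residue_class z = residue_class w \<longleftrightarrow> z - w \<in> P"
proof
  assume "residue_class z = residue_class w"
  moreover have "z \<in> residue_class z" using P_0 by (auto simp: residue_class_def intro!: exI[of _ 0])
  ultimately obtain p where "p \<in> P" "z = w + p" by (auto simp: residue_class_def)
  then show "z - w \<in> P" by simp
next
  have sub: "residue_class z \<subseteq> residue_class w" if "z - w \<in> P" for z w
  proof
    fix x assume "x \<in> residue_class z"
    then obtain p where "p \<in> P" "x = z + p" by (auto simp: residue_class_def)
    then have "x = w + ((z - w) + p)" "(z - w) + p \<in> P" using that P_add by auto
    then show "x \<in> residue_class w" unfolding residue_class_def by blast
  qed
  assume "z - w \<in> P"
  moreover have "w - z \<in> P" using P_uminus[OF \<open>z - w \<in> P\<close>] by simp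
  ultimately show "residue_class z = residue_class w" using sub by blast
qed

lemma sum_K_in_R: "(\<forall>b\<in>Z. a b \<in> K) \<Longrightarrow> Z \<subseteq> R \<Longrightarrow> (\<Sum>b\<in>Z. a b * b) \<in> R"
  using K_subset_R by (auto intro!: R_sum R_mult)

end

context valring_param
begin

lemma residue_relation:
  assumes I: "finite I" "card C < card I" and ws: "\<forall>i\<in>I. ws i \<in> R"
  shows "\<exists>a. (\<forall>i\<in>I. a i \<in> K) \<and> (\<exists>i\<in>I. a i \<noteq> 0) \<and> (\<Sum>i\<in>I. a i * ws i) \<in> P"
proof -
  obtain r where r: "\<forall>i\<in>I. poly_over K (r i)" "\<exists>i\<in>I. coeff (r i) 0 \<noteq> 0"
    "(\<Sum>i\<in>I. poly (r i) y * ws i) = 0"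
    using K_poly_relation_const[OF I] by blast
  txt \<open>Reducing the \<open>K[y]\<close>-relation modulo \<open>y \<in> P\<close> keeps the constant coefficients.\<close>
  have "\<forall>i\<in>I. \<exists>w\<in>R. poly (r i) y = coeff (r i) 0 + y * w"
  proof
    fix i assume i: "i \<in> I"
    obtain a q where aq: "r i = pCons a q" by (cases "r i")
    have "poly_over K (r i)" using r(1) i by blast
    then have "poly_over K q" using aq by (simp add: poly_over_pCons)
    then have "poly q y \<in> R" using R_poly_K y_P P_subset_R by blast
    moreover have "poly (r i) y = coeff (r i) 0 + y * poly q y" using aq by simp
    ultimately show "\<exists>w\<in>R. poly (r i) y = coeff (r i) 0 + y * w" by blast
  qed
  then obtain w where w: "\<And>i. i \<in> I \<Longrightarrow> w i \<in> R \<and> poly (r i) y = coeff (r i) 0 + y * w i" by metis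
  have "(\<Sum>i\<in>I. poly (r i) y * ws i) = (\<Sum>i\<in>I. (coeff (r i) 0 + y * w i) * ws i)"
    by (rule sum.cong) (auto simp: w)
  also have "\<dots> = (\<Sum>i\<in>I. coeff (r i) 0 * ws i) + y * (\<Sum>i\<in>I. w i * ws i)"
    by (simp add: distrib_right sum.distrib sum_distrib_left mult.assoc)
  finally have "(\<Sum>i\<in>I. coeff (r i) 0 * ws i) = - (y * (\<Sum>i\<in>I. w i * ws i))"
    using r(3) by (simp add: eq_neg_iff_add_eq_0)
  moreover have "(\<Sum>i\<in>I. w i * ws i) \<in> R" by (rule R_sum) (use w ws in \<open>auto intro: R_mult\<close>)
  then have "y * (\<Sum>i\<in>I. w i * ws i) \<in> P" using P_mult_R y_P by blast
  ultimately have "(\<Sum>i\<in>I. coeff (r i) 0 * ws i) \<in> P" using P_uminus by simp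
  then show ?thesis using r poly_over_coeff by (intro exI[of _ "\<lambda>i. coeff (r i) 0"]) auto
qed

lemma independent_mod_P_card:
  assumes "finite Z" "Z \<subseteq> R" "independent_mod K P Z"
  shows "card Z \<le> card C"
proof (rule ccontr)
  assume "\<not> card Z \<le> card C"
  then obtain a where "\<forall>i\<in>Z. a i \<in> K" "\<exists>i\<in>Z. a i \<noteq> 0" "(\<Sum>i\<in>Z. a i * id i) \<in> P"
    using residue_relation[of Z id] assms by auto
  then show False using assms(3) unfolding independent_mod_def by auto
qed

lemma residue_basis:
  "\<exists>Z. finite Z \<and> Z \<subseteq> R \<and> independent_mod K P Z \<and>
     (\<forall>z\<in>R. \<exists>a. (\<forall>b\<in>Z. a b \<in> K) \<and> z - (\<Sum>b\<in>Z. a b * b) \<in> P)"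
  using exists_independent_spanning[OF subfield_K P_0 R_mult_P independent_mod_P_card] K_subset_R
  by blast

text \<open>For a residue basis \<open>Z\<close>, \<open>a \<mapsto> \<Sum>b\<in>Z. a b * b\<close> induces a bijection \<open>K\<^sup>Z \<cong> R/P\<close>.\<close>

lemma deg_place_eq_card_basis:
  assumes Z: "finite Z" "Z \<subseteq> R" "independent_mod K P Z"
    "\<forall>z\<in>R. \<exists>a. (\<forall>b\<in>Z. a b \<in> K) \<and> z - (\<Sum>b\<in>Z. a b * b) \<in> P"
  shows "deg_place K R = card Z"
proof -
  define g where "g a = residue_class (\<Sum>b\<in>Z. a b * b)" for a
  have "inj_on g (Z \<rightarrow>\<^sub>E K)"
  proof (rule inj_onI)
    fix a a' assume a: "a \<in> Z \<rightarrow>\<^sub>E K" "a' \<in> Z \<rightarrow>\<^sub>E K" "g a = g a'"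
    then have "(\<Sum>b\<in>Z. (a b - a' b) * b) \<in> P"
      by (simp add: g_def residue_class_eq_iff sum_subtractf left_diff_distrib)
    moreover have "\<forall>b\<in>Z. a b - a' b \<in> K" using a subfield_diff[OF subfield_K] by (auto simp: PiE_def Pi_def)
    ultimately have "\<forall>b\<in>Z. a b - a' b = 0"
      using spec[OF Z(3)[unfolded independent_mod_def], of "\<lambda>b. a b - a' b"] by simp
    then show "a = a'" using a by (intro PiE_ext[of a Z "\<lambda>_. K"]) auto
  qed
  moreover have "g ` (Z \<rightarrow>\<^sub>E K) = residue_field R"
  proof
    show "g ` (Z \<rightarrow>\<^sub>E K) \<subseteq> residue_field R"
      unfolding residue_field_eq g_def using sum_K_in_R Z by (auto simp: PiE_def Pi_def)
    show "residue_field R \<subseteq> g ` (Z \<rightarrow>\<^sub>E K)"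
    proof
      fix X assume "X \<in> residue_field R"
      then obtain z where z: "z \<in> R" "X = residue_class z" by (auto simp: residue_field_eq)
      obtain a where a: "\<forall>b\<in>Z. a b \<in> K" "z - (\<Sum>b\<in>Z. a b * b) \<in> P" using Z(4) z(1) by blast
      have "(\<Sum>b\<in>Z. restrict a Z b * b) = (\<Sum>b\<in>Z. a b * b)" by (rule sum.cong) auto
      then have "g (restrict a Z) = residue_class (\<Sum>b\<in>Z. a b * b)" unfolding g_def by simp
      also have "\<dots> = X" using a(2) z(2) residue_class_eq_iff by blast
      finally have "g (restrict a Z) = X" .
      moreover have "restrict a Z \<in> Z \<rightarrow>\<^sub>E K" using a by auto
      ultimately show "X \<in> g ` (Z \<rightarrow>\<^sub>E K)" by blast
    qed
  qed
  ultimately have "card (residue_field R) = card (Z \<rightarrow>\<^sub>E K)" using card_image by metis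
  also have "\<dots> = card K ^ card Z" using Z(1) by (simp add: card_PiE)
  finally have card_res: "card (residue_field R) = card K ^ card Z" .
  show ?thesis unfolding deg_place_def
  proof (rule the_equality)
    fix n assume "card (residue_field R) = card K ^ n"
    then show "n = card Z" using card_res card_K power_inject_exp[of "card K" n "card Z"] by simp
  qed (rule card_res)
qed

end

context valring
begin

lemma finite_residue_reps: "\<exists>Rep. finite Rep \<and> Rep \<subseteq> R \<and> (\<forall>z\<in>R. \<exists>s\<in>Rep. z - s \<in> P)"
proof -
  obtain y C where "valring_param K R y C" using valring_param_exists by blast
  then interpret valring_param K R y C .
  obtain Z where Z: "finite Z" "Z \<subseteq> R" "independent_mod K P Z" "\<forall>z\<in>R. \<exists>a. (\<forall>b\<in>Z. a b \<in> K) \<and> z - (\<Sum>b\<in>Z. a b * b) \<in> P"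
    using residue_basis by blast
  define Rep where "Rep = (\<lambda>a. \<Sum>b\<in>Z. a b * b) ` (Z \<rightarrow>\<^sub>E K)"
  have "finite Rep" unfolding Rep_def using Z finite_K by (auto intro!: finite_PiE)
  moreover have "Rep \<subseteq> R" unfolding Rep_def using sum_K_in_R Z by (auto simp: PiE_def Pi_def)
  moreover have "\<exists>s\<in>Rep. z - s \<in> P" if zR: "z \<in> R" for z
  proof -
    obtain a where a: "\<forall>b\<in>Z. a b \<in> K" "z - (\<Sum>b\<in>Z. a b * b) \<in> P" using bspec[OF Z(4) zR] by blast
    have "restrict a Z \<in> Z \<rightarrow>\<^sub>E K" using a by auto
    then have "(\<lambda>a. \<Sum>b\<in>Z. a b * b) (restrict a Z) \<in> Rep" unfolding Rep_def by (rule imageI)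
    moreover have "(\<Sum>b\<in>Z. restrict a Z b * b) = (\<Sum>b\<in>Z. a b * b)" by (rule sum.cong) auto
    ultimately have "(\<Sum>b\<in>Z. a b * b) \<in> Rep" by simp
    then show ?thesis using a(2) by blast
  qed
  ultimately show ?thesis by blast
qed

lemma rational_residue:
  assumes deg: "deg_place K R = 1" and z: "z \<in> R"
  shows "\<exists>c\<in>K. z - c \<in> P"
proof -
  obtain y C where "valring_param K R y C" using valring_param_exists by blast
  then interpret valring_param K R y C .
  obtain Z where Z: "finite Z" "Z \<subseteq> R" "independent_mod K P Z"
    "\<forall>z\<in>R. \<exists>a. (\<forall>b\<in>Z. a b \<in> K) \<and> z - (\<Sum>b\<in>Z. a b * b) \<in> P"
    using residue_basis by blast
  then have "card Z = 1" using deg deg_place_eq_card_basis by simp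
  then obtain b where b: "Z = {b}" by (rule card_1_singletonE)
  have ex1: "\<exists>a\<in>K. w - a * b \<in> P" if "w \<in> R" for w
    using Z(4) that b by auto
  txt \<open>Since \<open>1 \<equiv> a\<^sub>1 b\<close>, the basis element is \<open>b \<equiv> 1/a\<^sub>1\<close> and \<open>z \<equiv> a\<^sub>z b \<equiv> a\<^sub>z/a\<^sub>1\<close>.\<close>
  obtain a1 where a1: "a1 \<in> K" "1 - a1 * b \<in> P" using ex1 R_1 by blast
  have a1nz: "a1 \<noteq> 0" using a1 one_notin_P by auto
  obtain az where az: "az \<in> K" "z - az * b \<in> P" using ex1 z by blast
  have inv_a1: "inverse a1 \<in> K" using a1 subfield_inverse[OF subfield_K] by auto
  have "b - inverse a1 = - inverse a1 * (1 - a1 * b)" using a1nz by (simp add: field_simps)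
  then have "b - inverse a1 \<in> P"
    using R_mult_P[OF R_uminus a1(2)] inv_a1 K_subset_R by auto
  then have "(z - az * b) + az * (b - inverse a1) \<in> P"
    using R_mult_P az K_subset_R P_add by auto
  moreover have "(z - az * b) + az * (b - inverse a1) = z - az * inverse a1" by (simp add: algebra_simps)
  moreover have "az * inverse a1 \<in> K" using az inv_a1 subfield_mult[OF subfield_K] by auto
  ultimately show ?thesis by auto
qed

lemma eval_at_eqI:
  assumes c: "c \<in> K" "z - c \<in> P"
  shows "eval_at K R z = c"
  unfolding eval_at_def
proof (rule the_equality)
  fix c' assume c': "c' \<in> K \<and> z - c' \<in> P"
  have "c - c' \<in> P" using P_diff[OF c'[THEN conjunct2] c(2)] by simp
  then show "c' = c" using unit_K[of "c - c'"] subfield_diff[OF subfield_K c(1)] c' unit_notin_P by force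
qed (use c in simp)

lemma eval_at_rational:
  assumes "deg_place K R = 1" "z \<in> R"
  shows "eval_at K R z \<in> K" "z - eval_at K R z \<in> P"
  using rational_residue[OF assms] eval_at_eqI by auto

lemma eval_at_mult:
  assumes deg: "deg_place K R = 1" and fh: "f \<in> R" "h \<in> R"
  shows "eval_at K R (f * h) = eval_at K R f * eval_at K R h"
proof (rule eval_at_eqI)
  let ?cf = "eval_at K R f" and ?ch = "eval_at K R h"
  note f = eval_at_rational[OF deg fh(1)] and h = eval_at_rational[OF deg fh(2)]
  show "?cf * ?ch \<in> K" using f(1) h(1) subfield_mult[OF subfield_K] by blast
  have "(f - ?cf) * h \<in> P" "?cf * (h - ?ch) \<in> P"
    using P_mult_R[OF f(2) fh(2)] R_mult_P[OF _ h(2)] f(1) K_subset_R by auto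
  moreover have "f * h - ?cf * ?ch = (f - ?cf) * h + ?cf * (h - ?ch)" by (simp add: algebra_simps)
  ultimately show "f * h - ?cf * ?ch \<in> P" using P_add by simp
qed

lemma eval_at_eq_imp_diff_in_P:
  assumes "deg_place K R = 1" "g \<in> R" "g' \<in> R" "eval_at K R g = eval_at K R g'"
  shows "g - g' \<in> P"
  using P_diff[OF eval_at_rational(2)[OF assms(1,2)] eval_at_rational(2)[OF assms(1,3)]] assms(4)
  by simp

end
section \<open>Existence of places\<close>

text \<open>Chevalley's construction: a pair (subring \<open>S \<supseteq> K\<close>, proper ideal \<open>I \<ni> w\<close> of \<open>S\<close>) that is maximal
  for componentwise inclusion is a valuation ring not containing \<open>1/w\<close>.\<close>

definition ring_ideal_pair :: "'f::field set \<Rightarrow> 'f \<Rightarrow> 'f set \<Rightarrow> 'f set \<Rightarrow> bool" where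
  "ring_ideal_pair K w S I \<longleftrightarrow> K \<subseteq> S \<and> (\<forall>a\<in>S. \<forall>b\<in>S. a + b \<in> S \<and> a * b \<in> S) \<and> (\<forall>a\<in>S. - a \<in> S) \<and>
     I \<subseteq> S \<and> 0 \<in> I \<and> (\<forall>a\<in>I. \<forall>b\<in>I. a + b \<in> I) \<and> (\<forall>a\<in>S. \<forall>b\<in>I. a * b \<in> I) \<and> w \<in> I \<and> 1 \<notin> I"

definition poly_values :: "'f::field set \<Rightarrow> 'f \<Rightarrow> 'f set" where
  "poly_values A b = {poly p b | p. poly_over A p}"

lemma poly_values_I: "poly_over A p \<Longrightarrow> poly p b \<in> poly_values A b"
  unfolding poly_values_def by blast

lemma poly_values_E: "x \<in> poly_values A b \<Longrightarrow> (\<And>p. poly_over A p \<Longrightarrow> x = poly p b \<Longrightarrow> thesis) \<Longrightarrow> thesis"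
  unfolding poly_values_def by blast

lemma poly_values_const: "0 \<in> A \<Longrightarrow> a \<in> A \<Longrightarrow> a \<in> poly_values A b"
  using poly_values_I[OF poly_over_const, of A a b] by simp

lemma poly_values_X: "0 \<in> A \<Longrightarrow> 1 \<in> A \<Longrightarrow> b \<in> poly_values A b"
  using poly_values_I[OF poly_over_X, of A b] by simp

lemma poly_values_mono: "A \<subseteq> B \<Longrightarrow> poly_values A b \<subseteq> poly_values B b"
  unfolding poly_values_def using poly_over_mono by blast

lemma poly_values_add:
  "(\<And>a c. a \<in> A \<Longrightarrow> c \<in> A \<Longrightarrow> a + c \<in> A) \<Longrightarrow> x \<in> poly_values A b \<Longrightarrow> y \<in> poly_values A b \<Longrightarrow>
    x + y \<in> poly_values A b"
  by (elim poly_values_E) (metis poly_add poly_over_add poly_values_I)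

lemma poly_values_uminus:
  "(\<And>a. a \<in> A \<Longrightarrow> - a \<in> A) \<Longrightarrow> x \<in> poly_values A b \<Longrightarrow> - x \<in> poly_values A b"
  by (elim poly_values_E) (metis poly_minus poly_over_uminus poly_values_I)

lemma poly_values_mult:
  assumes "0 \<in> C" "\<And>a c. a \<in> C \<Longrightarrow> c \<in> C \<Longrightarrow> a + c \<in> C" "\<And>a c. a \<in> A \<Longrightarrow> c \<in> B \<Longrightarrow> a * c \<in> C"
    and "x \<in> poly_values A b" "y \<in> poly_values B b"
  shows "x * y \<in> poly_values C b"
  using assms(4,5) by (elim poly_values_E) (metis poly_mult poly_over_mult[OF assms(1-3)] poly_values_I)

locale maximal_pair =
  fixes K :: "'f::field set" and w :: 'f and S :: "'f set" and I :: "'f set"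
  assumes K: "subfield K" and pair: "ring_ideal_pair K w S I"
    and maximal: "\<And>S' I'. ring_ideal_pair K w S' I' \<Longrightarrow> S \<subseteq> S' \<Longrightarrow> I \<subseteq> I' \<Longrightarrow> S' = S \<and> I' = I"
begin

lemma K_S: "K \<subseteq> S" using pair by (simp add: ring_ideal_pair_def)
lemma S_add: "a \<in> S \<Longrightarrow> b \<in> S \<Longrightarrow> a + b \<in> S" using pair by (simp add: ring_ideal_pair_def)
lemma S_mult: "a \<in> S \<Longrightarrow> b \<in> S \<Longrightarrow> a * b \<in> S" using pair by (simp add: ring_ideal_pair_def)
lemma S_uminus: "a \<in> S \<Longrightarrow> - a \<in> S" using pair by (simp add: ring_ideal_pair_def)
lemma I_S: "a \<in> I \<Longrightarrow> a \<in> S" using pair by (auto simp: ring_ideal_pair_def)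
lemma I_0: "0 \<in> I" using pair by (simp add: ring_ideal_pair_def)
lemma I_add: "a \<in> I \<Longrightarrow> b \<in> I \<Longrightarrow> a + b \<in> I" using pair by (simp add: ring_ideal_pair_def)
lemma SI_mult: "a \<in> S \<Longrightarrow> b \<in> I \<Longrightarrow> a * b \<in> I" using pair by (simp add: ring_ideal_pair_def)
lemma IS_mult: "a \<in> I \<Longrightarrow> b \<in> S \<Longrightarrow> a * b \<in> I" using SI_mult[of b a] by (simp add: mult.commute)
lemma w_I: "w \<in> I" using pair by (simp add: ring_ideal_pair_def)
lemma one_I: "1 \<notin> I" using pair by (simp add: ring_ideal_pair_def)
lemma S_0: "0 \<in> S" using K_S subfield_0[OF K] by auto
lemma S_1: "1 \<in> S" using K_S subfield_1[OF K] by auto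
lemma I_uminus: "a \<in> I \<Longrightarrow> - a \<in> I" using SI_mult[OF S_uminus[OF S_1], of a] by simp
lemma I_diff: "a \<in> I \<Longrightarrow> b \<in> I \<Longrightarrow> a - b \<in> I" using I_add[of a "- b"] I_uminus[of b] by simp
lemma S_diff: "a \<in> S \<Longrightarrow> b \<in> S \<Longrightarrow> a - b \<in> S" using S_add[of a "- b"] S_uminus[of b] by simp

lemma exists_inverse_mod_I: "s \<in> S \<Longrightarrow> s \<notin> I \<Longrightarrow> \<exists>r\<in>S. 1 - s * r \<in> I"
proof (rule ccontr)
  assume s: "s \<in> S" "s \<notin> I" and nr: "\<not> (\<exists>r\<in>S. 1 - s * r \<in> I)"
  define J where "J = {i + s * r | i r. i \<in> I \<and> r \<in> S}"
  have IJ: "I \<subseteq> J" unfolding J_def by (force intro: S_0)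
  have "ring_ideal_pair K w S J" unfolding ring_ideal_pair_def
  proof (intro conjI)
    show "K \<subseteq> S" by (rule K_S)
    show "\<forall>a\<in>S. \<forall>b\<in>S. a + b \<in> S \<and> a * b \<in> S" using S_add S_mult by blast
    show "\<forall>a\<in>S. - a \<in> S" using S_uminus by blast
    show "J \<subseteq> S" unfolding J_def using I_S S_add S_mult s by blast
    show "0 \<in> J" using IJ I_0 by blast
    show "\<forall>a\<in>J. \<forall>b\<in>J. a + b \<in> J"
    proof (intro ballI)
      fix a b assume "a \<in> J" "b \<in> J"
      then obtain i r i' r' where "i \<in> I" "r \<in> S" "i' \<in> I" "r' \<in> S" "a = i + s * r" "b = i' + s * r'"
        unfolding J_def by blast
      then have "a + b = (i + i') + s * (r + r')" "i + i' \<in> I" "r + r' \<in> S"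
        using I_add S_add by (auto simp: algebra_simps)
      then show "a + b \<in> J" unfolding J_def by blast
    qed
    show "\<forall>a\<in>S. \<forall>b\<in>J. a * b \<in> J"
    proof (intro ballI)
      fix a b assume "a \<in> S" "b \<in> J"
      then obtain i r where "i \<in> I" "r \<in> S" "b = i + s * r" unfolding J_def by blast
      then have "a * b = a * i + s * (a * r)" "a * i \<in> I" "a * r \<in> S"
        using SI_mult S_mult \<open>a \<in> S\<close> by (auto simp: algebra_simps)
      then show "a * b \<in> J" unfolding J_def by blast
    qed
    show "w \<in> J" using IJ w_I by blast
    show "1 \<notin> J"
    proof
      assume "1 \<in> J"
      then obtain i r where "i \<in> I" "r \<in> S" "1 = i + s * r" unfolding J_def by blast
      then have "1 - s * r \<in> I" by (metis add_diff_cancel_right')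
      then show False using nr \<open>r \<in> S\<close> by blast
    qed
  qed
  then have "J = I" using maximal[of S J] IJ by blast
  moreover have "s = 0 + s * 1" by simp
  then have "s \<in> J" unfolding J_def using I_0 S_1 by blast
  ultimately show False using s by blast
qed

lemma I_prime: "a \<in> S \<Longrightarrow> b \<in> S \<Longrightarrow> a * b \<in> I \<Longrightarrow> a \<notin> I \<Longrightarrow> b \<in> I"
proof -
  assume a: "a \<in> S" "b \<in> S" "a * b \<in> I" "a \<notin> I"
  obtain r where r: "r \<in> S" "1 - a * r \<in> I" using exists_inverse_mod_I a by blast
  have "b = b * (1 - a * r) + (a * b) * r" by (simp add: algebra_simps)
  moreover have "b * (1 - a * r) \<in> I" using SI_mult a r by blast
  moreover have "(a * b) * r \<in> I" using IS_mult a r by blast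
  ultimately show ?thesis using I_add by metis
qed

lemma power_notin_I: "s \<in> S \<Longrightarrow> s \<notin> I \<Longrightarrow> s ^ n \<notin> I"
proof (induction n)
  case 0 then show ?case using one_I by simp
next
  case (Suc n)
  have "s ^ n \<in> S" using Suc.prems by (induction n) (auto intro: S_1 S_mult)
  then show ?case using I_prime[of s "s ^ n"] Suc by auto
qed

lemma I_poly: "poly_over I p \<Longrightarrow> b \<in> S \<Longrightarrow> poly p b \<in> I"
  by (rule poly_closed) (auto intro: I_0 I_add SI_mult)

lemma ring_ideal_pair_adjoin:
  assumes one: "1 \<notin> poly_values I b"
  shows "ring_ideal_pair K w (poly_values S b) (poly_values I b)" "S \<subseteq> poly_values S b"
    "I \<subseteq> poly_values I b" "b \<in> poly_values S b"
proof -
  show SS: "S \<subseteq> poly_values S b" using poly_values_const[OF S_0] by blast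
  show II: "I \<subseteq> poly_values I b" using poly_values_const[OF I_0] by blast
  show "b \<in> poly_values S b" using poly_values_X[OF S_0 S_1] .
  show "ring_ideal_pair K w (poly_values S b) (poly_values I b)" unfolding ring_ideal_pair_def
  proof (intro conjI ballI)
    show "K \<subseteq> poly_values S b" using K_S SS by blast
    show "poly_values I b \<subseteq> poly_values S b" using poly_values_mono I_S by blast
    show "0 \<in> poly_values I b" "w \<in> poly_values I b" using II I_0 w_I by blast+
    show "1 \<notin> poly_values I b" by (rule one)
    fix x y
    show "x \<in> poly_values S b \<Longrightarrow> y \<in> poly_values S b \<Longrightarrow> x + y \<in> poly_values S b"
      by (rule poly_values_add[OF S_add])
    show "x \<in> poly_values S b \<Longrightarrow> y \<in> poly_values S b \<Longrightarrow> x * y \<in> poly_values S b"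
      by (rule poly_values_mult[OF S_0 S_add S_mult])
    show "x \<in> poly_values S b \<Longrightarrow> - x \<in> poly_values S b"
      by (rule poly_values_uminus[OF S_uminus])
    show "x \<in> poly_values I b \<Longrightarrow> y \<in> poly_values I b \<Longrightarrow> x + y \<in> poly_values I b"
      by (rule poly_values_add[OF I_add])
    show "x \<in> poly_values S b \<Longrightarrow> y \<in> poly_values I b \<Longrightarrow> x * y \<in> poly_values I b"
      by (rule poly_values_mult[OF I_0 I_add SI_mult])
  qed
qed

lemma mem_S_if_1_notin:
  assumes "1 \<notin> poly_values I b"
  shows "b \<in> S"
proof -
  have "poly_values S b = S"
    using maximal[OF ring_ideal_pair_adjoin(1-3)[OF assms]] by blast
  then show ?thesis using ring_ideal_pair_adjoin(4)[OF assms] by simp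
qed

lemma inverse_in_S: "s \<in> S \<Longrightarrow> s \<notin> I \<Longrightarrow> inverse s \<in> S"
proof -
  assume s: "s \<in> S" "s \<notin> I"
  have snz: "s \<noteq> 0" using s I_0 by auto
  have "1 \<notin> poly_values I (inverse s)"
  proof
    assume "1 \<in> poly_values I (inverse s)"
    then obtain p where p: "poly_over I p" "1 = poly p (inverse s)" by (rule poly_values_E)
    have "poly (reflect_poly p) s = s ^ degree p" using poly_reflect_poly_nz[OF snz, of p] p(2)[symmetric] by simp
    moreover have "poly_over I (reflect_poly p)" using p(1) I_0 by (auto simp: poly_over_def coeff_reflect_poly)
    ultimately have "s ^ degree p \<in> I" using I_poly s by metis
    then show False using power_notin_I s by blast
  qed
  then show ?thesis by (rule mem_S_if_1_notin)
qed

text \<open>Since \<open>q(1/b) = 1\<close>, the element \<open>(1 - q\<^sub>0) b\<^sup>n\<close> is a polynomial of degree \<open>< n\<close> in \<open>b\<close> with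
  coefficients in \<open>I\<close>, and \<open>1 - q\<^sub>0\<close> is invertible in \<open>S\<close> because \<open>q\<^sub>0 \<in> I\<close>.\<close>

lemma power_as_lower_degree_poly:
  assumes b: "b \<noteq> 0" and q: "poly_over I q" "poly q (inverse b) = 1" and deg: "degree q \<le> m"
  shows "\<exists>r. poly_over I r \<and> poly r b = b ^ m \<and> degree r < m"
proof -
  define n where "n = degree q"
  have nz: "n \<ge> 1"
  proof (rule ccontr)
    assume "\<not> n \<ge> 1"
    then have "n = 0" by simp
    then have "poly q (inverse b) = coeff q 0" by (simp add: poly_altdef n_def)
    then show False using q poly_over_coeff one_I by metis
  qed
  have mn: "n \<le> m" using deg by (simp add: n_def)
  define q0 where "q0 = coeff q 0"
  have q0: "q0 \<in> I" using q poly_over_coeff q0_def by metis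
  define u where "u = 1 - q0"
  have uS: "u \<in> S" using S_1 I_S q0 S_diff u_def by blast
  have uI: "u \<notin> I"
  proof
    assume "u \<in> I"
    then have "u + q0 \<in> I" using q0 I_add by blast
    then show False using one_I u_def by simp
  qed
  have iu: "inverse u \<in> S" using inverse_in_S uS uI by blast
  have unz: "u \<noteq> 0" using uI I_0 by auto
  define r0 where "r0 = reflect_poly q - monom q0 n"
  have pr0: "poly r0 b = u * b ^ n"
    using poly_reflect_poly_nz[OF b, of q] q by (simp add: r0_def poly_monom u_def n_def algebra_simps)
  have dr0: "degree r0 \<le> n - 1"
  proof (rule degree_le, intro allI impI)
    fix i assume "n - 1 < i"
    then have "i \<ge> n" by simp
    then show "coeff r0 i = 0" using nz
      by (auto simp: r0_def coeff_reflect_poly coeff_monom n_def q0_def)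
  qed
  have pcr0: "poly_over I r0" unfolding r0_def
    by (rule poly_over_diff[OF I_diff]) (auto simp: poly_over_def coeff_reflect_poly coeff_monom q I_0 q0 poly_over_coeff[OF q(1)])
  define r where "r = monom 1 (m - n) * smult (inverse u) r0"
  have bm: "b ^ m = b ^ (m - n) * b ^ n" using mn by (simp flip: power_add)
  have pr: "poly r b = b ^ m"
    using pr0 unz by (simp add: r_def poly_monom bm)
  have pcr: "poly_over I r" unfolding r_def
  proof (rule poly_over_mult[OF I_0 I_add _ _ poly_over_smult])
    show "poly_over S (monom 1 (m - n))" using S_0 S_1 by (rule poly_over_monom)
    show "\<And>a b. a \<in> S \<Longrightarrow> b \<in> I \<Longrightarrow> a * b \<in> I" by (rule SI_mult)
    show "\<And>b. b \<in> I \<Longrightarrow> inverse u * b \<in> I" using SI_mult iu by blast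
    show "poly_over I r0" by (rule pcr0)
  qed
  have dr: "degree r < m"
  proof -
    have "degree r \<le> (m - n) + degree (smult (inverse u) r0)"
      unfolding r_def using degree_mult_le degree_monom_le by (meson add_le_mono le_trans order_refl)
    also have "\<dots> \<le> (m - n) + (n - 1)" using degree_smult_le dr0 by (meson add_le_mono le_trans order_refl)
    also have "\<dots> < m" using nz mn by simp
    finally show ?thesis .
  qed
  show ?thesis using pcr pr dr by blast
qed

text \<open>Replacing the leading term \<open>c b\<^sup>m\<close> of \<open>p(b)\<close> by \<open>c r(b)\<close> lowers the degree.\<close>

lemma degree_reduction:
  assumes b: "b \<noteq> 0" and p: "poly_over I p" "poly p b = 1" and q: "poly_over I q" "poly q (inverse b) = 1"
    and deg: "degree q \<le> degree p"
  shows "\<exists>p'. poly_over I p' \<and> poly p' b = 1 \<and> degree p' < degree p"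
proof -
  define m where "m = degree p"
  obtain r where r: "poly_over I r" "poly r b = b ^ m" "degree r < m"
    using power_as_lower_degree_poly[OF b q] deg by (auto simp: m_def)
  define lc where "lc = coeff p m"
  have lc: "lc \<in> I" using p(1) poly_over_coeff lc_def by metis
  define pl where "pl = p - monom lc m"
  have m0: "m \<ge> 1" using r(3) by simp
  have dpl: "degree pl < m"
  proof -
    have False: "m \<noteq> 0" using m0 by simp
    have "degree pl \<le> m - 1"
    proof (rule degree_le, intro allI impI)
      fix i assume "m - 1 < i"
      then have "i \<ge> m" by simp
      then show "coeff pl i = 0" using False
        by (cases "i = m") (auto simp: pl_def lc_def coeff_monom m_def coeff_eq_0)
    qed
    then show ?thesis using False by simp
  qed
  define p' where "p' = pl + smult lc r"
  have "poly p b = poly pl b + lc * b ^ m" by (simp add: pl_def poly_monom)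
  then have "poly p' b = 1" using p(2) r(2) by (simp add: p'_def)
  moreover have "poly_over I p'" unfolding p'_def
  proof (rule poly_over_add[OF I_add])
    show "poly_over I pl" unfolding pl_def by (rule poly_over_diff[OF I_diff p(1) poly_over_monom[OF I_0 lc]])
    show "poly_over I (smult lc r)" by (rule poly_over_smult[OF _ r(1)]) (use IS_mult[OF lc] I_S in blast)
  qed
  moreover have "degree p' < m"
  proof -
    have "degree (smult lc r) < m" using degree_smult_le r(3) le_less_trans by blast
    moreover have "degree pl < m" using dpl by auto
    ultimately show ?thesis unfolding p'_def by (rule degree_add_less[rotated])
  qed
  ultimately show ?thesis unfolding m_def by blast
qed

lemma S_or_inverse_S: "a \<noteq> 0 \<Longrightarrow> a \<in> S \<or> inverse a \<in> S"
proof (rule ccontr)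
  assume a: "a \<noteq> 0" and na: "\<not> (a \<in> S \<or> inverse a \<in> S)"
  have ex: "\<exists>p. poly_over I p \<and> poly p c = 1" if "c \<notin> S" for c
  proof -
    have "1 \<in> poly_values I c" using mem_S_if_1_notin that by blast
    then obtain p where "poly_over I p" "1 = poly p c" by (rule poly_values_E)
    then show ?thesis by metis
  qed
  obtain p0 where "poly_over I p0 \<and> poly p0 a = 1" using ex na by blast
  then obtain p where p: "poly_over I p" "poly p a = 1"
    and pmin: "\<And>p'. poly_over I p' \<and> poly p' a = 1 \<Longrightarrow> degree p \<le> degree p'"
    using ex_has_least_nat[of "\<lambda>p. poly_over I p \<and> poly p a = 1" p0 degree] by blast
  obtain q0 where "poly_over I q0 \<and> poly q0 (inverse a) = 1" using ex na by blast
  then obtain q where q: "poly_over I q" "poly q (inverse a) = 1"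
    and qmin: "\<And>q'. poly_over I q' \<and> poly q' (inverse a) = 1 \<Longrightarrow> degree q \<le> degree q'"
    using ex_has_least_nat[of "\<lambda>q. poly_over I q \<and> poly q (inverse a) = 1" q0 degree] by blast
  show False
  proof (cases "degree q \<le> degree p")
    case True
    then obtain p' where "poly_over I p'" "poly p' a = 1" "degree p' < degree p" using degree_reduction[OF a p q] by blast
    then show False using pmin by fastforce
  next
    case False
    have ia: "inverse a \<noteq> 0" using a by simp
    have "poly p (inverse (inverse a)) = 1" using p by simp
    then obtain q' where "poly_over I q'" "poly q' (inverse a) = 1" "degree q' < degree q"
      using degree_reduction[OF ia q p(1)] False by auto
    then show False using qmin by fastforce
  qed
qed

end

lemma ring_ideal_pair_chain_Union:
  assumes C: "C \<in> chains {X. ring_ideal_pair K w (Inl -` X) (Inr -` X)}" "C \<noteq> {}"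
  shows "ring_ideal_pair K w (Inl -` \<Union>C) (Inr -` \<Union>C)"
proof -
  have pair: "ring_ideal_pair K w (Inl -` X) (Inr -` X)" if "X \<in> C" for X
    using C(1) that chainsD2 by blast
  have common: "\<exists>X\<in>C. x \<in> X \<and> y \<in> X" if "x \<in> \<Union>C" "y \<in> \<Union>C" for x y
    using that chainsD[OF C(1)] by blast
  obtain X0 where X0: "X0 \<in> C" using C(2) by blast
  show ?thesis unfolding ring_ideal_pair_def
  proof (intro conjI ballI)
    show "K \<subseteq> Inl -` \<Union>C" "0 \<in> Inr -` \<Union>C" "w \<in> Inr -` \<Union>C"
      using pair[OF X0] X0 by (auto simp: ring_ideal_pair_def)
    show "1 \<notin> Inr -` \<Union>C"
    proof
      assume "1 \<in> Inr -` \<Union>C"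
      then obtain X where "X \<in> C" "Inr 1 \<in> X" by auto
      then show False using pair[of X] by (simp add: ring_ideal_pair_def)
    qed
    show "Inr -` \<Union>C \<subseteq> Inl -` \<Union>C"
    proof
      fix a assume "a \<in> Inr -` \<Union>C"
      then obtain X where "X \<in> C" "Inr a \<in> X" by auto
      then show "a \<in> Inl -` \<Union>C" using pair[of X] by (auto simp: ring_ideal_pair_def)
    qed
    fix a assume a: "a \<in> Inl -` \<Union>C"
    then obtain X where X: "X \<in> C" "Inl a \<in> X" by auto
    then show "- a \<in> Inl -` \<Union>C" using pair[of X] by (auto simp: ring_ideal_pair_def)
    fix b assume "b \<in> Inl -` \<Union>C"
    then obtain X where X: "X \<in> C" "Inl a \<in> X" "Inl b \<in> X" using a common[of "Inl a" "Inl b"] by auto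
    then have "a + b \<in> Inl -` X" "a * b \<in> Inl -` X" using pair[of X] by (simp_all add: ring_ideal_pair_def)
    then show "a + b \<in> Inl -` \<Union>C" "a * b \<in> Inl -` \<Union>C" using X(1) by blast+
  next
    fix a b assume "a \<in> Inr -` \<Union>C" "b \<in> Inr -` \<Union>C"
    then obtain X where X: "X \<in> C" "Inr a \<in> X" "Inr b \<in> X" using common[of "Inr a" "Inr b"] by auto
    then have "a + b \<in> Inr -` X" using pair[of X] by (simp add: ring_ideal_pair_def)
    then show "a + b \<in> Inr -` \<Union>C" using X(1) by blast
  next
    fix a b assume "a \<in> Inl -` \<Union>C" "b \<in> Inr -` \<Union>C"
    then obtain X where X: "X \<in> C" "Inl a \<in> X" "Inr b \<in> X" using common[of "Inl a" "Inr b"] by auto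
    then have "a * b \<in> Inr -` X" using pair[of X] by (simp add: ring_ideal_pair_def)
    then show "a * b \<in> Inr -` \<Union>C" using X(1) by blast
  qed
qed

text \<open>Zorn's lemma is applied to pairs \<open>(S, I)\<close> encoded as the sets \<open>Inl ` S \<union> Inr ` I\<close>.\<close>

lemma exists_maximal_pair:
  assumes K: "subfield K" and pair: "ring_ideal_pair K w S0 I0"
  shows "\<exists>S I. maximal_pair K w S I"
proof -
  define A where "A = {X. ring_ideal_pair K w (Inl -` X) (Inr -` X)}"
  have enc: "Inl -` (Inl ` S \<union> Inr ` I) = S" "Inr -` (Inl ` S \<union> Inr ` I) = I" for S I :: "'a set"
    by auto
  have "\<exists>M\<in>A. \<forall>X\<in>A. M \<subseteq> X \<longrightarrow> X = M"
  proof (rule Zorn_Lemma2, intro ballI)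
    fix C assume C: "C \<in> chains A"
    show "\<exists>U\<in>A. \<forall>X\<in>C. X \<subseteq> U"
    proof (cases "C = {}")
      case True
      have "Inl ` S0 \<union> Inr ` I0 \<in> A" using pair enc[of S0 I0] by (simp only: A_def mem_Collect_eq)
      then show ?thesis using True by blast
    next
      case False
      have "\<Union>C \<in> A" using ring_ideal_pair_chain_Union[of C K w] C False by (simp add: A_def)
      then show ?thesis by blast
    qed
  qed
  then obtain M where M: "M \<in> A" "\<And>X. X \<in> A \<Longrightarrow> M \<subseteq> X \<Longrightarrow> X = M" by blast
  have "maximal_pair K w (Inl -` M) (Inr -` M)"
  proof
    show "subfield K" by (rule K)
    show "ring_ideal_pair K w (Inl -` M) (Inr -` M)" using M(1) by (simp add: A_def)
    fix S' I' assume S'I': "ring_ideal_pair K w S' I'" "Inl -` M \<subseteq> S'" "Inr -` M \<subseteq> I'"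
    have "M \<subseteq> Inl ` S' \<union> Inr ` I'"
    proof
      fix x assume "x \<in> M" then show "x \<in> Inl ` S' \<union> Inr ` I'" using S'I'(2,3) by (cases x) auto
    qed
    then have "Inl ` S' \<union> Inr ` I' = M" using M(2) S'I'(1) enc by (simp add: A_def)
    then show "S' = Inl -` M \<and> I' = Inr -` M" using enc by metis
  qed
  then show ?thesis by blast
qed

context fun_field
begin

lemma ring_ideal_pair_initial:
  assumes w: "w \<notin> K"
  shows "ring_ideal_pair K w (poly_values K w) {w * s | s. s \<in> poly_values K w}"
  unfolding ring_ideal_pair_def
proof (intro conjI ballI)
  let ?S = "poly_values K w" and ?I = "{w * s | s. s \<in> poly_values K w}"
  show KS: "K \<subseteq> ?S" using poly_values_const[OF K_0] by blast
  have wS: "w \<in> ?S" by (rule poly_values_X[OF K_0 K_1])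
  have S_add: "a + b \<in> ?S" and S_mult: "a * b \<in> ?S" if "a \<in> ?S" "b \<in> ?S" for a b
    using poly_values_add[OF subfield_add[OF subfield_K] that]
      poly_values_mult[OF K_0 subfield_add[OF subfield_K] subfield_mult[OF subfield_K] that] by blast+
  show "1 \<notin> ?I"
  proof
    assume "1 \<in> ?I"
    then obtain s where s: "s \<in> ?S" "1 = w * s" by blast
    obtain p where p: "poly_over K p" "s = poly p w" using s(1) by (rule poly_values_E)
    have "poly (pCons (- 1) p) w = 0" using s(2) p(2) by simp
    moreover have "poly_over K (pCons (- 1) p)"
      using p(1) subfield_uminus[OF subfield_K K_1] by (simp add: poly_over_pCons)
    moreover have "pCons (- 1) p \<noteq> 0" by simp
    ultimately show False using root_in_K w by blast
  qed
  show "?I \<subseteq> ?S" using S_mult wS by blast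
  show "0 \<in> ?I" using KS K_0 by (auto intro!: exI[of _ 0])
  show "w \<in> ?I" using KS K_1 by (auto intro!: exI[of _ 1])
  fix a b
  show "a \<in> ?S \<Longrightarrow> b \<in> ?S \<Longrightarrow> a + b \<in> ?S" "a \<in> ?S \<Longrightarrow> b \<in> ?S \<Longrightarrow> a * b \<in> ?S"
    by (rule S_add S_mult; assumption)+
  show "a \<in> ?S \<Longrightarrow> - a \<in> ?S" by (rule poly_values_uminus[OF subfield_uminus[OF subfield_K]])
  show "a + b \<in> ?I" if ab: "a \<in> ?I" "b \<in> ?I"
  proof -
    obtain s t where "s \<in> ?S" "t \<in> ?S" "a = w * s" "b = w * t" using ab by blast
    then show ?thesis using S_add by (auto simp: distrib_left[symmetric])
  qed
  show "a * b \<in> ?I" if ab: "a \<in> ?S" "b \<in> ?I"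
  proof -
    obtain t where "t \<in> ?S" "b = w * t" using ab(2) by blast
    then show ?thesis using S_mult ab(1) by (auto simp: mult.left_commute)
  qed
qed

lemma valuation_ring_avoiding:
  assumes z: "z \<notin> K"
  shows "\<exists>R. valuation_ring K R \<and> z \<notin> R"
proof -
  define w where "w = inverse z"
  have znz: "z \<noteq> 0" using z K_0 by auto
  have "w \<notin> K" using z subfield_inverse[OF subfield_K, of w] by (auto simp: w_def)
  then obtain S I where "maximal_pair K w S I"
    using exists_maximal_pair[OF subfield_K ring_ideal_pair_initial] by blast
  then interpret maximal_pair K w S I .
  have zS: "z \<notin> S"
  proof
    assume "z \<in> S"
    then have "z * w \<in> I" using SI_mult w_I by blast
    then show False using one_I znz by (simp add: w_def)
  qed
  have "S \<noteq> UNIV" using zS by blast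
  then have "valuation_ring K S" unfolding valuation_ring_def
    using K_S S_add S_mult S_uminus S_or_inverse_S by simp
  then show ?thesis using zS by blast
qed

end

section \<open>Riemann--Roch spaces\<close>

lemma inj_on_lincomb:
  assumes K: "subfield K" and Z: "independent_mod K {0} Z"
  shows "inj_on (\<lambda>a. \<Sum>b\<in>Z. a b * b) (Z \<rightarrow>\<^sub>E K)"
proof (rule inj_onI)
  fix a a' assume a: "a \<in> Z \<rightarrow>\<^sub>E K" "a' \<in> Z \<rightarrow>\<^sub>E K" "(\<Sum>b\<in>Z. a b * b) = (\<Sum>b\<in>Z. a' b * b)"
  then have "(\<Sum>b\<in>Z. (a b - a' b) * b) \<in> {0}" by (simp add: sum_subtractf left_diff_distrib)
  moreover have "\<forall>b\<in>Z. a b - a' b \<in> K" using a subfield_diff[OF K] by (auto simp: PiE_def Pi_def)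
  ultimately have "\<forall>b\<in>Z. a b - a' b = 0"
    using spec[OF Z[unfolded independent_mod_def], of "\<lambda>b. a b - a' b"] by simp
  then show "a = a'" using a by (intro PiE_ext[of a Z "\<lambda>_. K"]) auto
qed

lemma card_subspace:
  assumes K: "subfield K" "finite K"
    and V: "finite V" "0 \<in> V" "\<And>a b. a \<in> V \<Longrightarrow> b \<in> V \<Longrightarrow> a + b \<in> V"
      "\<And>c a. c \<in> K \<Longrightarrow> a \<in> V \<Longrightarrow> c * a \<in> V"
  shows "\<exists>n. card V = card K ^ n"
proof -
  define g where "g Z a = (\<Sum>b\<in>Z. a b * b)" for Z and a :: "'a \<Rightarrow> 'a"
  have image: "g Z ` (Z \<rightarrow>\<^sub>E K) \<subseteq> V" if "Z \<subseteq> V" for Z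
  proof
    fix x assume "x \<in> g Z ` (Z \<rightarrow>\<^sub>E K)"
    then obtain a where a: "a \<in> Z \<rightarrow>\<^sub>E K" "x = g Z a" by blast
    have "(\<Sum>b\<in>Z. a b * b) \<in> V"
    proof (rule sum_closed[OF V(2) V(3)])
      fix b assume "b \<in> Z"
      then show "a b * b \<in> V" using a(1) that V(4) by (auto simp: PiE_def Pi_def)
    qed
    then show "x \<in> V" using a(2) by (simp add: g_def)
  qed
  have card_image_g: "card (g Z ` (Z \<rightarrow>\<^sub>E K)) = card K ^ card Z"
    if "finite Z" "independent_mod K {0} Z" for Z
    using card_image[OF inj_on_lincomb[OF K(1) that(2)]] that(1) by (simp add: g_def card_PiE)
  have "{0, 1} \<subseteq> K" using subfield_0[OF K(1)] subfield_1[OF K(1)] by simp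
  from card_mono[OF K(2) this] have "2 \<le> card K" by simp
  have bound: "card Z \<le> card V" if "finite Z" "Z \<subseteq> V" "independent_mod K {0} Z" for Z
  proof -
    have "card Z < 2 ^ card Z" by (rule less_exp)
    also have "\<dots> \<le> card K ^ card Z" using \<open>2 \<le> card K\<close> by (rule power_mono) simp
    also have "\<dots> \<le> card V" using card_image_g[OF that(1,3)] card_mono[OF V(1) image[OF that(2)]] by simp
    finally show ?thesis by simp
  qed
  have "\<exists>Z. finite Z \<and> Z \<subseteq> V \<and> independent_mod K {0} Z \<and>
      (\<forall>z\<in>V. \<exists>a. (\<forall>b\<in>Z. a b \<in> K) \<and> z - (\<Sum>b\<in>Z. a b * b) \<in> {0})"
    by (rule exists_independent_spanning[OF K(1), where n = "card V"]) (simp_all add: bound)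
  then obtain Z where Z: "finite Z" "Z \<subseteq> V" "independent_mod K {0} Z"
    "\<forall>z\<in>V. \<exists>a. (\<forall>b\<in>Z. a b \<in> K) \<and> z - (\<Sum>b\<in>Z. a b * b) \<in> {0}"
    by (elim exE conjE) (rule that)
  have "V \<subseteq> g Z ` (Z \<rightarrow>\<^sub>E K)"
  proof
    fix z assume "z \<in> V"
    then obtain a where a: "\<forall>b\<in>Z. a b \<in> K" "z - (\<Sum>b\<in>Z. a b * b) \<in> {0}" using Z(4) by blast
    then have "z = g Z a" by (simp add: g_def)
    have "g Z (restrict a Z) = g Z a" unfolding g_def by (rule sum.cong) auto
    moreover have "restrict a Z \<in> Z \<rightarrow>\<^sub>E K" using a(1) by simp
    ultimately show "z \<in> g Z ` (Z \<rightarrow>\<^sub>E K)" using \<open>z = g Z a\<close> by (metis image_eqI)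
  qed
  then have "V = g Z ` (Z \<rightarrow>\<^sub>E K)" using image[OF Z(2)] by blast
  then have "card V = card K ^ card Z" using card_image_g[OF Z(1,3)] by simp
  then show ?thesis ..
qed

context fun_field
begin

lemma valring_place: "R \<in> places K \<Longrightarrow> valring K R"
  unfolding places_def valring_def valring_axioms_def using fun_field_axioms by simp

lemma Lspace_iff: "f \<in> Lspace K E \<longleftrightarrow> f = 0 \<or> (\<forall>R\<in>places K. 0 \<le> val R f + E R)"
  by (auto simp: Lspace_def principal_div_def)

lemma Lspace_0: "0 \<in> Lspace K E" by (simp add: Lspace_iff)

lemma Lspace_add: "f \<in> Lspace K E \<Longrightarrow> g \<in> Lspace K E \<Longrightarrow> f + g \<in> Lspace K E"
proof -
  assume f: "f \<in> Lspace K E" and g: "g \<in> Lspace K E"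
  have "- E R \<le> val R (f + g)" if "R \<in> places K" "f + g \<noteq> 0" for R
    by (rule valring.val_add_ge[OF valring_place[OF that(1)] that(2)])
      (use f g that(1) in \<open>auto simp: Lspace_iff\<close>)
  then show ?thesis unfolding Lspace_iff by fastforce
qed

lemma Lspace_uminus: "f \<in> Lspace K E \<Longrightarrow> - f \<in> Lspace K E"
  unfolding Lspace_iff using valring.val_uminus valring_place by fastforce

lemma Lspace_diff: "f \<in> Lspace K E \<Longrightarrow> g \<in> Lspace K E \<Longrightarrow> f - g \<in> Lspace K E"
  using Lspace_add[of f E "- g"] Lspace_uminus[of g E] by simp

lemma Lspace_smult: "a \<in> K \<Longrightarrow> f \<in> Lspace K E \<Longrightarrow> a * f \<in> Lspace K E"
proof (cases "a = 0 \<or> f = 0")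
  case False
  assume a: "a \<in> K" and f: "f \<in> Lspace K E"
  have "val R (a * f) = val R f" if "R \<in> places K" for R
    using valring.val_mult[OF valring_place[OF that]] valring.val_K[OF valring_place[OF that] a] False
    by simp
  then show ?thesis using f False by (auto simp: Lspace_iff)
qed (auto simp: Lspace_iff)

lemma Lspace_mono: "(\<And>R. R \<in> places K \<Longrightarrow> E R \<le> E' R) \<Longrightarrow> Lspace K E \<subseteq> Lspace K E'"
  by (auto simp: Lspace_iff) (meson add_left_mono order_trans)

lemma Lspace_regular:
  assumes "R \<in> places K" "E R \<le> 0" "z \<in> Lspace K E"
  shows "z \<in> R"
proof (cases "z = 0")
  case False
  then show ?thesis
    using assms valring.val_nonneg_iff[OF valring_place[OF assms(1)] False] by (auto simp: Lspace_iff)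
qed (use valring.R_0[OF valring_place[OF assms(1)]] in simp)

text \<open>A non-constant has a pole at the place provided by \<open>valuation_ring_avoiding\<close>.\<close>

lemma Lspace_zero_subset_K: "Lspace K (\<lambda>_. 0) \<subseteq> K"
proof
  fix f assume f: "f \<in> Lspace K (\<lambda>_. 0)"
  show "f \<in> K"
  proof (rule ccontr)
    assume "f \<notin> K"
    then obtain R where R: "valuation_ring K R" "f \<notin> R" using valuation_ring_avoiding by blast
    then have "R \<in> places K" by (simp add: places_def)
    then show False using Lspace_regular[of R "\<lambda>_. 0" f] f R(2) by simp
  qed
qed

lemma Lspace_diff_lower:
  assumes Q: "Q \<in> places K" and T: "T \<noteq> 0" "val Q T = A Q"
    and fg: "f \<in> Lspace K A" "g \<in> Lspace K A" "T * f - T * g \<in> place_ideal Q"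
  shows "f - g \<in> Lspace K (A(Q := A Q - 1))"
proof -
  interpret Q: valring K Q using valring_place[OF Q] .
  have d: "f - g \<in> Lspace K A" using Lspace_diff fg by blast
  have "0 \<le> val R (f - g) + (A(Q := A Q - 1)) R" if R: "R \<in> places K" "f - g \<noteq> 0" for R
  proof (cases "R = Q")
    case True
    have "T * (f - g) \<in> place_ideal Q" using fg(3) by (simp add: algebra_simps)
    then have "1 \<le> val Q (T * (f - g))" using Q.val_pos_iff T R(2) by simp
    then show ?thesis using Q.val_mult[OF T(1) R(2)] T True by simp
  qed (use d R in \<open>auto simp: Lspace_iff\<close>)
  then show ?thesis unfolding Lspace_iff by blast
qed

text \<open>Lowering \<open>A\<close> by one at \<open>Q\<close> has finite index: \<open>f \<mapsto> T f\<close> modulo the place ideal takes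
  finitely many values, and two functions with the same value differ by an element of the
  smaller space.\<close>

lemma finite_Lspace_step:
  assumes Q: "Q \<in> places K" and AQ: "0 < A Q" and fin: "finite (Lspace K (A(Q := A Q - 1)))"
  shows "finite (Lspace K A)"
proof -
  interpret Q: valring K Q using valring_place[OF Q] .
  obtain t where t: "t \<noteq> 0" "val Q t = 1" using Q.exists_val_1 by blast
  obtain Rep where Rep: "finite Rep" "\<forall>z\<in>Q. \<exists>s\<in>Rep. z - s \<in> place_ideal Q"
    using Q.finite_residue_reps by blast
  define T where "T = t ^ nat (A Q)"
  have T: "T \<noteq> 0" "val Q T = A Q" using t Q.val_power[of t "nat (A Q)"] AQ by (auto simp: T_def)
  have "T * f \<in> Q" if "f \<in> Lspace K A" for f
  proof (cases "f = 0")
    case False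
    then have "0 \<le> val Q (T * f)" using that Q T Q.val_mult[OF T(1) False] by (auto simp: Lspace_iff)
    then show ?thesis using Q.val_nonneg_iff T False by simp
  qed (simp add: Q.R_0)
  then have "\<forall>f\<in>Lspace K A. \<exists>s\<in>Rep. T * f - s \<in> place_ideal Q" using Rep(2) by blast
  then obtain \<phi> where \<phi>: "\<And>f. f \<in> Lspace K A \<Longrightarrow> \<phi> f \<in> Rep \<and> T * f - \<phi> f \<in> place_ideal Q"
    by metis
  define rep where "rep s = (SOME f. f \<in> Lspace K A \<and> \<phi> f = s)" for s
  have "Lspace K A \<subseteq> (\<Union>s\<in>Rep. (\<lambda>h. rep s + h) ` Lspace K (A(Q := A Q - 1)))"
  proof
    fix f assume f: "f \<in> Lspace K A"
    have r: "rep (\<phi> f) \<in> Lspace K A \<and> \<phi> (rep (\<phi> f)) = \<phi> f"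
      unfolding rep_def by (rule someI[of _ f]) (use f in simp)
    have "(T * f - \<phi> f) - (T * rep (\<phi> f) - \<phi> (rep (\<phi> f))) \<in> place_ideal Q"
      using \<phi>[OF f] \<phi>[of "rep (\<phi> f)"] r Q.P_diff by blast
    then have "f - rep (\<phi> f) \<in> Lspace K (A(Q := A Q - 1))"
      using Lspace_diff_lower[OF Q T f] r by simp
    then have "f \<in> (\<lambda>h. rep (\<phi> f) + h) ` Lspace K (A(Q := A Q - 1))" by (rule image_eqI[rotated]) simp
    then show "f \<in> (\<Union>s\<in>Rep. (\<lambda>h. rep s + h) ` Lspace K (A(Q := A Q - 1)))" using \<phi>[OF f] by blast
  qed
  moreover have "finite (\<Union>s\<in>Rep. (\<lambda>h. rep s + h) ` Lspace K (A(Q := A Q - 1)))"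
    using Rep(1) fin by auto
  ultimately show ?thesis by (rule finite_subset)
qed

lemma finite_Lspace_effective:
  assumes "finite S" "S \<subseteq> places K" "\<And>R. 0 \<le> A R" "\<And>R. R \<notin> S \<Longrightarrow> A R = 0"
  shows "finite (Lspace K A)"
  using assms(3,4)
proof (induction "\<Sum>R\<in>S. nat (A R)" arbitrary: A rule: less_induct)
  case less
  show ?case
  proof (cases "\<exists>Q\<in>S. 0 < A Q")
    case False
    then have "A = (\<lambda>_. 0)" using less.prems by (metis antisym not_le)
    then show ?thesis using Lspace_zero_subset_K finite_K finite_subset by metis
  next
    case True
    then obtain Q where Q: "Q \<in> S" "0 < A Q" by blast
    let ?A = "A(Q := A Q - 1)"
    have "nat (?A R) \<le> nat (A R)" for R by (auto intro: nat_mono)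
    moreover have "nat (?A Q) < nat (A Q)" using Q(2) by simp
    ultimately have "(\<Sum>R\<in>S. nat (?A R)) < (\<Sum>R\<in>S. nat (A R))"
      using Q(1) assms(1) by (intro sum_strict_mono_ex1) blast+
    moreover have "\<And>R. 0 \<le> ?A R" "\<And>R. R \<notin> S \<Longrightarrow> ?A R = 0"
      using less.prems Q by auto
    ultimately have "finite (Lspace K ?A)" by (rule less.hyps)
    then show ?thesis using finite_Lspace_step Q assms(2) by blast
  qed
qed

lemma finite_Lspace:
  assumes "finite {R. 0 < E R}"
  shows "finite (Lspace K E)"
proof -
  define A where "A R = (if R \<in> places K then max (E R) 0 else 0)" for R
  have "finite (Lspace K A)"
    by (rule finite_Lspace_effective[of "{R. 0 < E R} \<inter> places K"]) (use assms in \<open>auto simp: A_def\<close>)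
  moreover have "Lspace K E \<subseteq> Lspace K A" by (rule Lspace_mono) (simp add: A_def)
  ultimately show ?thesis by (rule finite_subset[rotated])
qed

lemma Lspace_trivial_if_ell_0:
  assumes fin: "finite (Lspace K E)" and ell: "ell K E = 0"
  shows "Lspace K E = {0}"
proof -
  obtain n where n: "card (Lspace K E) = card K ^ n"
    using card_subspace[OF subfield_K finite_K fin Lspace_0 Lspace_add Lspace_smult] by blast
  have "ell K E = n" unfolding ell_def
  proof (rule the_equality)
    fix n' assume "card (Lspace K E) = card K ^ n'"
    then show "n' = n" using n card_K power_inject_exp[of "card K" n' n] by simp
  qed (rule n)
  then have "card (Lspace K E) = 1" using n ell by simp
  then show ?thesis using Lspace_0[of E] by (metis card_1_singletonE singletonD)
qed

end

section \<open>Products of algebraic geometry codes\<close>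

context fun_field
begin

lemma Lspace_mult_principal:
  assumes "f \<noteq> 0" "h \<in> Lspace K E"
  shows "f * h \<in> Lspace K (E - principal_div K f)"
proof (cases "h = 0")
  case False
  have "val R (f * h) = val R f + val R h" if "R \<in> places K" for R
    using valring.val_mult[OF valring_place[OF that] assms(1) False] .
  then show ?thesis using assms(2) False by (auto simp: Lspace_iff principal_div_def)
qed (simp add: Lspace_0)

lemma Lspace_gcd_div: "g \<in> Lspace K A \<Longrightarrow> g \<in> Lspace K B \<Longrightarrow> g \<in> Lspace K (gcd_div A B)"
  by (auto simp: Lspace_iff gcd_div_def min_def)

lemma Lspace_lcm_div_diff: "g \<in> Lspace K A \<Longrightarrow> h \<in> Lspace K B \<Longrightarrow> g - h \<in> Lspace K (lcm_div A B)"
proof -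
  assume "g \<in> Lspace K A" "h \<in> Lspace K B"
  then have "g \<in> Lspace K (lcm_div A B)" "h \<in> Lspace K (lcm_div A B)"
    using Lspace_mono[of A "lcm_div A B"] Lspace_mono[of B "lcm_div A B"] by (auto simp: lcm_div_def)
  then show ?thesis by (rule Lspace_diff)
qed

lemma Lspace_minus_sum_places:
  assumes z: "z \<in> Lspace K E" and Ps: "Ps \<subseteq> places K"
    and zero: "\<And>R. R \<in> Ps \<Longrightarrow> 0 \<le> E R \<and> z \<in> place_ideal R"
  shows "z \<in> Lspace K (E - sum_places Ps)"
proof (cases "z = 0")
  case False
  have "0 \<le> val R z + (E - sum_places Ps) R" if R: "R \<in> places K" for R
  proof (cases "R \<in> Ps")
    case True
    then have "1 \<le> val R z" "0 \<le> E R"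
      using valring.val_pos_iff[OF valring_place[OF R] False] zero by auto
    then show ?thesis using True by (simp add: sum_places_def)
  qed (use z False R in \<open>auto simp: Lspace_iff sum_places_def\<close>)
  then show ?thesis by (simp add: Lspace_iff)
qed (simp add: Lspace_0)

lemma pole_bound:
  assumes "f \<in> Lspace K J" "f \<noteq> 0" "R \<in> places K"
  shows "- principal_div K f R \<le> J R"
  using assms by (auto simp: Lspace_iff principal_div_def)

lemma finite_pos_minus_principal:
  assumes "is_divisor K H" "is_divisor K J" "f \<in> Lspace K J" "f \<noteq> 0"
  shows "finite {R. 0 < (H - principal_div K f) R}"
proof (rule finite_subset)
  show "{R. 0 < (H - principal_div K f) R} \<subseteq> {R. H R \<noteq> 0} \<union> {R. J R \<noteq> 0}"
  proof
    fix R assume R: "R \<in> {R. 0 < (H - principal_div K f) R}"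
    show "R \<in> {R. H R \<noteq> 0} \<union> {R. J R \<noteq> 0}"
    proof (cases "R \<in> places K")
      case True
      then show ?thesis using R pole_bound[OF assms(3,4) True] by auto
    qed (use R in \<open>simp add: principal_div_def\<close>)
  qed
  show "finite ({R. H R \<noteq> 0} \<union> {R. J R \<noteq> 0})" using assms(1,2) by (simp add: is_divisor_def)
qed

lemma ev_D_0:
  assumes "Ps \<subseteq> rational_places K"
  shows "ev_D K Ps 0 = (\<lambda>_. 0)"
proof
  fix R show "ev_D K Ps 0 R = 0"
  proof (cases "R \<in> Ps")
    case True
    then interpret valring K R using assms valring_place by (auto simp: rational_places_def)
    show ?thesis using True eval_at_eqI[OF K_0] P_0 by (simp add: ev_D_def)
  qed (simp add: ev_D_def)
qed

lemma zero_in_AG_code: "Ps \<subseteq> rational_places K \<Longrightarrow> (\<lambda>_. 0) \<in> AG_code K Ps E"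
  using ev_D_0 Lspace_0 unfolding AG_code_def by (metis image_eqI)

lemma ev_D_mult_imp_in_place_ideal:
  assumes R: "R \<in> Ps" "Ps \<subseteq> rational_places K" and fgh: "g \<in> R" "f \<in> R" "h \<in> R"
    and ev: "ev_D K Ps g R = ev_D K Ps f R * ev_D K Ps h R"
  shows "g - f * h \<in> place_ideal R"
proof -
  have deg: "deg_place K R = 1" and "R \<in> places K" using R by (auto simp: rational_places_def)
  then interpret valring K R using valring_place by blast
  have "eval_at K R g = eval_at K R (f * h)"
    using ev R(1) eval_at_mult[OF deg fgh(2,3)] by (simp add: ev_D_def)
  then show ?thesis using eval_at_eq_imp_diff_in_P[OF deg fgh(1) R_mult[OF fgh(2,3)]] by blast
qed

theorem AG_code_inter_mult_code:
  assumes Ps: "Ps \<subseteq> rational_places K"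
    and zero: "\<And>R. R \<in> Ps \<Longrightarrow> G R = 0 \<and> H R = 0 \<and> J R = 0"
    and f: "f \<in> Lspace K J" "f \<noteq> 0"
    and gcd: "Lspace K (gcd_div G (H - principal_div K f)) = {0}"
    and lcm: "Lspace K (lcm_div G (H - principal_div K f) - sum_places Ps) = {0}"
  shows "AG_code K Ps G \<inter> cw_mult_code (ev_D K Ps f) (AG_code K Ps H) = {\<lambda>_. 0}"
proof (intro equalityI subsetI)
  have places: "R \<in> places K" if "R \<in> Ps" for R using Ps that by (auto simp: rational_places_def)
  fix v assume "v \<in> AG_code K Ps G \<inter> cw_mult_code (ev_D K Ps f) (AG_code K Ps H)"
  then obtain g h where g: "g \<in> Lspace K G" "v = ev_D K Ps g"
    and h: "h \<in> Lspace K H" "v = (\<lambda>R. ev_D K Ps f R * ev_D K Ps h R)"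
    by (auto simp: AG_code_def cw_mult_code_def)
  have fh: "f * h \<in> Lspace K (H - principal_div K f)" by (rule Lspace_mult_principal[OF f(2) h(1)])
  have vanish: "g - f * h \<in> place_ideal R" if "R \<in> Ps" for R
    using ev_D_mult_imp_in_place_ideal[OF that Ps] Lspace_regular[OF places[OF that]] g h f(1) zero[OF that]
    by (metis order_refl)
  have "g - f * h \<in> Lspace K (lcm_div G (H - principal_div K f) - sum_places Ps)"
  proof (rule Lspace_minus_sum_places[OF Lspace_lcm_div_diff[OF g(1) fh]])
    show "Ps \<subseteq> places K" using places by blast
    fix R assume "R \<in> Ps"
    then show "0 \<le> lcm_div G (H - principal_div K f) R \<and> g - f * h \<in> place_ideal R"
      using zero vanish by (simp add: lcm_div_def)
  qed
  then have "g = f * h" using lcm by simp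
  then have "g \<in> Lspace K (gcd_div G (H - principal_div K f))" using Lspace_gcd_div[OF g(1)] fh by simp
  then have "g = 0" using gcd by blast
  then show "v \<in> {\<lambda>_. 0}" using g(2) ev_D_0[OF Ps] by simp
next
  show "v \<in> AG_code K Ps G \<inter> cw_mult_code (ev_D K Ps f) (AG_code K Ps H)" if "v \<in> {\<lambda>_. 0}" for v
    using that zero_in_AG_code[OF Ps] unfolding cw_mult_code_def by (auto intro!: image_eqI)
qed

end

theorem corollary4p6:
  fixes K :: "'f::field set" and Ps :: "'f set set"
    and G H J :: "'f divisor" and f :: 'f
  assumes ff: "function_field K"
    and Ps: "Ps \<subset> rational_places K"
    and divs: "is_divisor K G" "is_divisor K H" "is_divisor K J"
    and degs: "deg_div K G \<le> deg_div K (sum_places Ps) - 1"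
              "deg_div K H \<le> deg_div K (sum_places Ps) - 1"
              "deg_div K J \<le> deg_div K (sum_places Ps) - 1"
    and disj: "(supp G \<union> supp H \<union> supp J) \<inter> supp (sum_places Ps) = {}"
    and fL: "f \<in> Lspace K J" and fnz: "f \<noteq> 0"
    and i: "ell K (gcd_div G (H - principal_div K f)) = 0"
    and ii: "ell K (lcm_div G (H - principal_div K f) - sum_places Ps) = 0"
  shows "AG_code K Ps G \<inter> cw_mult_code (ev_D K Ps f) (AG_code K Ps H) = {(\<lambda>_. 0)}"
proof -
  interpret fun_field K using ff by unfold_locales
  have fin_G: "finite {R. 0 < G R}" using divs(1) by (auto simp: is_divisor_def elim: finite_subset[rotated])
  note fin_H = finite_pos_minus_principal[OF divs(2,3) fL fnz]
  have "finite {R. 0 < gcd_div G (H - principal_div K f) R}"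
    using fin_G by (auto simp: gcd_div_def elim: finite_subset[rotated])
  moreover have "finite {R. 0 < (lcm_div G (H - principal_div K f) - sum_places Ps) R}"
    by (rule finite_subset[of _ "{R. 0 < G R} \<union> {R. 0 < (H - principal_div K f) R}"])
      (use fin_G fin_H in \<open>auto simp: lcm_div_def sum_places_def\<close>)
  ultimately have "Lspace K (gcd_div G (H - principal_div K f)) = {0}"
    "Lspace K (lcm_div G (H - principal_div K f) - sum_places Ps) = {0}"
    using i ii by (simp_all add: Lspace_trivial_if_ell_0 finite_Lspace)
  moreover have "G R = 0 \<and> H R = 0 \<and> J R = 0" if "R \<in> Ps" for R
    using disj that by (auto simp: supp_def sum_places_def)
  ultimately show ?thesis using AG_code_inter_mult_code[of Ps G H J f] Ps fL fnz by blast
qed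

end
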